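(* In the kernel SGD setting below, assume the capacity condition with exponent $\beta>1$, the source condition with exponent $s>0$, and hypercontractivity with constant $C$. Run one-pass SGD for $N$ steps with $\eta_k=\eta_0(1-k/N)^\gamma$, $k=0,\dots,N-1$. Let $c_0$ be a constant with $0<c_0\le\lambda_1^{-1}$ and $c_0<(2C\,\mathrm{tr}(\mathcal T))^{-1}$. Then: (i) If $s\ge1-1/\beta$, $\gamma>\beta-1$ and $\eta_0=c_0N^{-\frac{s\beta-\beta+1}{s\beta+1}}$, then $\mathbb E[\mathcal E(\theta_N)]\lesssim N^{-\frac{s\beta}{s\beta+1}}$. (ii) If $s<1-1/\beta$, $\gamma>\frac{s}{1-s}$ and $\eta_0=c_0$, then $\mathbb E[\mathcal E(\theta_N)]\lesssim N^{-s}$. Implicit constants do not depend on $N$.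
   Context: Kernel SGD setting. $\mathcal X$ is an input space, $\mathcal D$ a distribution on $\mathcal X\times\mathbb R$ with marginal $\mathcal D_{\mathcal X}$; $\mathbb H$ is a separable Hilbert space and $\phi:\mathcal X\to\mathbb H$ a feature map with kernel $K(x,x')=\langle\phi(x),\phi(x')\rangle$ and $\mathbb E[K(x,x)]<\infty$. The covariance operator $\mathcal T=\mathbb E[\phi(x)\otimes\phi(x)]$ has eigenvalues $\lambda_1\ge\lambda_2\ge\dots\ge0$ with orthonormal eigenvectors $v_j\in\mathbb H$; $\mathrm{tr}(\mathcal T)=\sum_j\lambda_j$; $e_j(x)=\lambda_j^{-1/2}\langle v_j,\phi(x)\rangle$ (orthonormal in $L^2(\mathcal D_{\mathcal X})$). Labels: $y=f^*(x)+\epsilon$, $\epsilon\sim\mathcal N(0,\sigma^2)$ independent of $x$, with $f^*$ in the $L^2$-closure of $\mathrm{span}\{e_j\}$. Capacity condition: $\lambda_j\le c\,j^{-\beta}$ for all $j$. Source condition: $f^*=\sum_j a_j\lambda_j^{s/2}e_j$ with $\sum_ja_j^2\le1$; set $\theta^*_j=a_j\lambda_j^{(s-1)/2}$. Hypercontractivity: $\mathbb E[\langle u,\phi(x)\rangle^2\langle v,\phi(x)\rangle^2]\le C\,\mathbb E[\langle u,\phi(x)\rangle^2]\mathbb E[\langle v,\phi(x)\rangle^2]$ for all $u,v\in\mathbb H$. One-pass SGD: i.i.d. samples $(x_k,y_k)\sim\mathcal D$, $\theta_0=0$, $\theta_{k+1}=\theta_k-\eta_k(\langle\theta_k,\phi(x_k)\rangle-y_k)\phi(x_k)$.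 Excess risk: $\mathcal E(\theta)=\frac12\mathbb E_x[(\langle\theta,\phi(x)\rangle-f^*(x))^2]=\frac12\sum_j\lambda_j(\langle\theta,v_j\rangle-\theta_j^* )^2$. *)

theory Defs
  imports "HOL-Probability.Probability"
begin

fun sgd_iter :: "(nat \<Rightarrow> real) \<Rightarrow> ('x \<Rightarrow> 'h::real_inner) \<Rightarrow> (nat \<Rightarrow> 'x \<times> real) \<Rightarrow> nat \<Rightarrow> 'h" where
  "sgd_iter eta phi z 0 = 0"
| "sgd_iter eta phi z (Suc k) =
     (let th = sgd_iter eta phi z k in
        th - (eta k * (inner th (phi (fst (z k))) - snd (z k))) *\<^sub>R phi (fst (z k)))"

definition excess_risk :: "'x measure \<Rightarrow> ('x \<Rightarrow> 'h::real_inner) \<Rightarrow> ('x \<Rightarrow> real) \<Rightarrow> 'h \<Rightarrow> ennreal" where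
  "excess_risk mu phi f th = (\<integral>\<^sup>+ x. ennreal ((inner th (phi x) - f x)\<^sup>2 / 2) \<partial>mu)"

definition data_dist :: "'x measure \<Rightarrow> ('x \<Rightarrow> real) \<Rightarrow> real \<Rightarrow> ('x \<times> real) measure" where
  "data_dist mu f sig =
     distr (mu \<Otimes>\<^sub>M density lborel (normal_density 0 sig)) (mu \<Otimes>\<^sub>M borel)
           (\<lambda>(x, e). (x, f x + e))"

definition expected_risk ::
  "'x measure \<Rightarrow> ('x \<Rightarrow> 'h::real_inner) \<Rightarrow> ('x \<Rightarrow> real) \<Rightarrow> real \<Rightarrow> (nat \<Rightarrow> real) \<Rightarrow> nat \<Rightarrow> ennreal" where
  "expected_risk mu phi f sig eta N =
     (\<integral>\<^sup>+ z. excess_risk mu phi f (sgd_iter eta phi z N) \<partial>(PiM {..<N} (\<lambda>_. data_dist mu f sig)))"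

definition eigfun :: "(nat \<Rightarrow> real) \<Rightarrow> (nat \<Rightarrow> 'h::real_inner) \<Rightarrow> ('x \<Rightarrow> 'h) \<Rightarrow> nat \<Rightarrow> 'x \<Rightarrow> real" where
  "eigfun lam v phi j x = lam j powr (-1/2) * inner (v j) (phi x)"

end

theory Submission
  imports Defs
begin

text \<open>Write \<open>D\<^sub>j(k)\<close> for the expected squared error of the j-th eigen-coordinate of the
  iterate after k steps. Averaging one step over the fresh sample gives
  \<open>D\<^sub>j(k+1) \<le> (1 - \<eta>\<^sub>k\<lambda>\<^sub>j) D\<^sub>j(k) + \<eta>\<^sub>k\<^sup>2 \<lambda>\<^sub>j (C \<Sum>\<^sub>i \<lambda>\<^sub>i D\<^sub>i(k) + \<sigma>\<^sup>2)\<close>: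
  the cross term comes from the eigen-equation, the fourth moment is bounded by hypercontractivity
  (transferred from finite truncations of the source expansion to f* by Fatou's lemma), and the
  Gaussian label noise contributes \<open>\<sigma>\<^sup>2\<close>. Unrolling the recursion, and using \<open>2 C c\<^sub>0 tr(T) < 1\<close> to keep
  the feedback term \<open>C \<Sum>\<^sub>i \<lambda>\<^sub>i D\<^sub>i(k)\<close> below twice its initial value, twice the excess risk is at
  most the bias \<open>\<Sum>\<^sub>j \<lambda>\<^sub>j \<theta>*\<^sub>j\<^sup>2 \<Prod>\<^sub>m (1 - \<eta>\<^sub>m\<lambda>\<^sub>j) \<le> (s / \<Sum>\<^sub>m \<eta>\<^sub>m)\<^sup>s\<close> plus a constant times the
  variance \<open>\<Sum>\<^sub>j \<lambda>\<^sub>j \<Sum>\<^sub>i \<eta>\<^sub>i\<^sup>2 \<lambda>\<^sub>j \<Prod>\<^sub>m\<^sub>>\<^sub>i (1 - \<eta>\<^sub>m\<lambda>\<^sub>j)\<close>. For \<open>\<eta>\<^sub>k = \<eta>\<^sub>0 (1 - k/N)\<^sup>\<gamma>\<close> the j-th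
  variance summand is at most \<open>min (x\<^sup>2, K x powr (1/(\<gamma>+1))) / N\<close> with \<open>x = \<lambda>\<^sub>j \<eta>\<^sub>0 N\<close>; summing this
  under the capacity condition and balancing against the bias gives both rates.\<close>

lemma exp_neg_le_four_div_sq:
  fixes y :: real
  assumes y: "0 < y"
  shows "exp (- y) \<le> 4 / y\<^sup>2"
proof -
  have "1 + y / 2 \<le> exp (y / 2)" by (rule exp_ge_add_one_self)
  then have "(y / 2)\<^sup>2 \<le> (exp (y / 2))\<^sup>2" using y by (intro power_mono) linarith+
  also have "(exp (y / 2))\<^sup>2 = exp y" by (simp add: power2_eq_square exp_add[symmetric])
  finally have "y\<^sup>2 \<le> 4 * exp y" by (simp add: power_divide)
  then show ?thesis using y by (simp add: exp_minus field_simps)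
qed

lemma powr_mult_exp_neg_le:
  fixes x S s :: real
  assumes x: "0 \<le> x" and S: "0 < S" and s: "0 < s"
  shows "x powr s * exp (- x * S) \<le> (s / S) powr s"
proof (cases "x = 0")
  case True then show ?thesis by simp
next
  case False
  define y where "y = x * S / s"
  have yp: "0 < y" unfolding y_def using False x S s by simp
  have ys: "y powr s \<le> exp (x * S)"
  proof -
    have "y \<le> exp y" using exp_ge_add_one_self[of y] by linarith
    then have "y powr s \<le> (exp y) powr s"
      using yp s by (intro powr_mono2) auto
    also have "(exp y) powr s = exp (x * S)" unfolding y_def using s by (simp add: powr_def)
    finally show ?thesis .
  qed
  have "x powr s = (s / S) powr s * y powr s"
    unfolding y_def using S s x by (subst powr_mult[symmetric]) auto
  then have "x powr s * exp (- x * S) = (s / S) powr s * (y powr s * exp (- (x * S)))"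
    by (simp add: mult_ac)
  also have "\<dots> \<le> (s / S) powr s"
    using ys by (intro mult_left_le) (auto simp: exp_minus field_simps)
  finally show ?thesis .
qed

lemma powr_mult_exp_neg_powr_le:
  fixes x M g :: real
  assumes x: "0 < x" and M: "0 < M" and g: "0 \<le> g"
  shows "x powr (2*g) * exp (- ((x / M) powr (g+1))) \<le> 4 * M powr (2*g+2) / x\<^sup>2"
proof -
  define y where "y = (x / M) powr (g+1)"
  have y2: "y\<^sup>2 = x powr (2*g+2) / M powr (2*g+2)"
    unfolding y_def using x M
    by (simp add: power2_eq_square powr_add[symmetric] powr_divide algebra_simps)
  have xp: "x powr (2*g+2) = x powr (2*g) * x\<^sup>2"
    using x by (simp add: powr_add power2_eq_square)
  have "x powr (2*g) * exp (- y) \<le> x powr (2*g) * (4 / y\<^sup>2)"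
    using x M by (intro mult_left_mono exp_neg_le_four_div_sq) (simp_all add: y_def)
  also have "\<dots> = 4 * M powr (2*g+2) / x\<^sup>2"
    unfolding y2 xp using x M by (simp add: field_simps)
  finally show ?thesis unfolding y_def .
qed

lemma sum_inverse_sq_greaterThan_le_telescope:
  fixes b N :: nat
  assumes b: "1 \<le> b"
  shows "(\<Sum>n\<in>{b<..<N}. 1 / (real n)\<^sup>2) \<le> 1 / real b - 1 / real (max b (N - 1))"
proof (induction N)
  case 0 then show ?case by simp
next
  case (Suc N)
  show ?case
  proof (cases "b < N")
    case True
    then have "{b<..<Suc N} = insert N {b<..<N}" by auto
    moreover have "1 / (real N)\<^sup>2 \<le> 1 / (real N - 1) - 1 / real N"
      using True b by (simp add: field_simps power2_eq_square)
    moreover have "max b (N - 1) = N - 1" "max b (Suc N - 1) = N" "real (N - 1) = real N - 1"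
      using True by auto
    ultimately show ?thesis using Suc.IH by simp
  next
    case False
    then have "{b<..<Suc N} = {}" "max b (Suc N - 1) = b" by auto
    then show ?thesis by simp
  qed
qed

lemma sum_inverse_sq_greaterThan_le:
  fixes a N :: nat
  shows "(\<Sum>n\<in>{a<..<N}. 1 / (real n)\<^sup>2) \<le> 2 / (real a + 1)"
proof (cases "a = 0")
  case True
  have "(\<Sum>n\<in>{0<..<N}. 1 / (real n)\<^sup>2) \<le> 1 + (\<Sum>n\<in>{1<..<N}. 1 / (real n)\<^sup>2)"
  proof (cases "N \<le> 1")
    case False
    then have "{0<..<N} = insert 1 {1<..<N}" by auto
    then show ?thesis by simp
  next
    case True
    then have "{0<..<N} = {}" by auto
    moreover have "0 \<le> (\<Sum>n\<in>{1<..<N}. 1 / (real n)\<^sup>2)" by (rule sum_nonneg) simp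
    ultimately show ?thesis by simp
  qed
  also have "\<dots> \<le> 2"
  proof -
    have "(\<Sum>n\<in>{1<..<N}. 1 / (real n)\<^sup>2) \<le> 1 - 1 / real (max 1 (N - 1))"
      using sum_inverse_sq_greaterThan_le_telescope[of 1 N] by simp
    moreover have "0 \<le> 1 / real (max 1 (N - 1))" by simp
    ultimately show ?thesis by linarith
  qed
  finally show ?thesis using True by simp
next
  case False
  have "(\<Sum>n\<in>{a<..<N}. 1 / (real n)\<^sup>2) \<le> 1 / real a"
  proof -
    have "(\<Sum>n\<in>{a<..<N}. 1 / (real n)\<^sup>2) \<le> 1 / real a - 1 / real (max a (N - 1))"
      using False by (intro sum_inverse_sq_greaterThan_le_telescope) simp
    moreover have "0 \<le> 1 / real (max a (N - 1))" by simp
    ultimately show ?thesis by argo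
  qed
  also have "\<dots> \<le> 2 / (real a + 1)" using False by (simp add: field_simps)
  finally show ?thesis .
qed

lemma sum_powr_mult_exp_neg_powr_le:
  fixes M g :: real
  assumes M: "0 < M" and g: "0 \<le> g"
  shows "(\<Sum>n\<in>{0<..<N}. real n powr (2*g) * exp (- ((real n / M) powr (g+1)))) \<le> 9 * M powr (2*g+1)"
proof -
  define F where "F n = real n powr (2*g) * exp (- ((real n / M) powr (g+1)))" for n :: nat
  define a where "a = nat \<lfloor>M\<rfloor>"
  have aM: "real a \<le> M" "M < real a + 1" unfolding a_def using M by linarith+
  have F0: "0 \<le> F n" for n unfolding F_def by simp
  have head: "(\<Sum>n\<in>{1..a}. F n) \<le> M powr (2*g+1)"
  proof -
    have "F n \<le> M powr (2*g)" if "n \<le> a" for n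
    proof -
      have "F n \<le> real n powr (2*g)" unfolding F_def by (intro mult_left_le) auto
      also have "\<dots> \<le> M powr (2*g)" using that aM g by (simp add: powr_mono2)
      finally show ?thesis .
    qed
    then have "(\<Sum>n\<in>{1..a}. F n) \<le> real a * M powr (2*g)"
      using sum_mono[of "{1..a}" F "\<lambda>_. M powr (2*g)"] by simp
    also have "\<dots> \<le> M * M powr (2*g)" using aM by (simp add: mult_right_mono)
    also have "\<dots> = M powr (2*g+1)" using M by (simp add: powr_add)
    finally show ?thesis .
  qed
  have tail: "(\<Sum>n\<in>{a<..<N}. F n) \<le> 8 * M powr (2*g+1)"
  proof -
    have "(\<Sum>n\<in>{a<..<N}. F n) \<le> (\<Sum>n\<in>{a<..<N}. 4 * M powr (2*g+2) * (1 / (real n)\<^sup>2))"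
      using powr_mult_exp_neg_powr_le[OF _ M g] by (intro sum_mono) (auto simp: F_def)
    also have "\<dots> = 4 * M powr (2*g+2) * (\<Sum>n\<in>{a<..<N}. 1 / (real n)\<^sup>2)"
      by (simp add: sum_distrib_left)
    also have "\<dots> \<le> 4 * M powr (2*g+2) * (2 / M)"
    proof -
      have "2 / (real a + 1) \<le> 2 / M" using aM M by (intro divide_left_mono) auto
      then show ?thesis using sum_inverse_sq_greaterThan_le[of a N] by (intro mult_left_mono) auto
    qed
    also have "\<dots> = 8 * M powr (2*g+1)"
      using M powr_add[of M "2*g+1" 1] by (simp add: field_simps add.assoc)
    finally show ?thesis .
  qed
  have "(\<Sum>n\<in>{0<..<N}. F n) \<le> (\<Sum>n\<in>{1..a} \<union> {a<..<N}. F n)"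
    using F0 by (intro sum_mono2) auto
  also have "\<dots> = (\<Sum>n\<in>{1..a}. F n) + (\<Sum>n\<in>{a<..<N}. F n)"
    by (rule sum.union_disjoint) auto
  finally show ?thesis unfolding F_def[symmetric] using head tail by simp
qed

lemma powr_diff_mean_value:
  fixes u w r :: real
  assumes u: "0 < u" and uw: "u < w"
  shows "\<exists>z. u < z \<and> z < w \<and> w powr r - u powr r = (w - u) * (r * z powr (r - 1))"
proof -
  have "\<And>x. u \<le> x \<Longrightarrow> x \<le> w \<Longrightarrow> ((\<lambda>t. t powr r) has_real_derivative r * x powr (r - 1)) (at x)"
    using u by (intro has_real_derivative_powr) auto
  from MVT2[OF uw this] show ?thesis by auto
qed

lemma summable_shifted_powr:
  fixes b :: real
  assumes "1 < b"
  shows "summable (\<lambda>j. (real j + 1) powr (-b))"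
proof -
  have "summable (\<lambda>j. real j powr (-b))" using assms by (simp add: summable_real_powr_iff)
  then have "summable (\<lambda>j. real (Suc j) powr (-b))" by (subst summable_Suc_iff)
  then show ?thesis by (simp add: add.commute)
qed

lemma sum_shifted_powr_le:
  fixes q :: real
  assumes q0: "0 \<le> q" and q1: "q < 1"
  shows "(\<Sum>j<J. (real j + 1) powr (-q)) \<le> real J powr (1 - q) / (1 - q)"
proof -
  define T where "T k = real k powr (1 - q) / (1 - q)" for k :: nat
  have step: "(real j + 1) powr (-q) \<le> T (Suc j) - T j" for j
  proof (cases "j = 0")
    case True then show ?thesis using q0 q1 by (simp add: T_def)
  next
    case False
    then obtain z where z: "real j < z" "z < real j + 1"
      and eq: "(real j + 1) powr (1 - q) - real j powr (1 - q) = (1 - q) * z powr (-q)"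
      using powr_diff_mean_value[of "real j" "real j + 1" "1 - q"] by auto
    have "(real j + 1) powr (-q) \<le> z powr (-q)"
      using z False q0 by (intro powr_mono2') auto
    also have "\<dots> = T (Suc j) - T j"
    proof -
      have "z powr (-q) = ((real j + 1) powr (1 - q) - real j powr (1 - q)) / (1 - q)"
        using eq q1 by (simp add: field_simps)
      then show ?thesis unfolding T_def by (simp add: diff_divide_distrib add.commute)
    qed
    finally show ?thesis .
  qed
  have "(\<Sum>j<J. (real j + 1) powr (-q)) \<le> (\<Sum>j<J. T (Suc j) - T j)" by (intro sum_mono step)
  also have "\<dots> = T J - T 0" by (rule sum_lessThan_telescope)
  finally show ?thesis by (simp add: T_def)
qed

lemma suminf_shifted_powr_tail_le:
  fixes b :: real and J :: nat
  assumes b: "1 < b" and J: "1 \<le> J"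
  shows "(\<Sum>j. (real (j + J) + 1) powr (-b)) \<le> real J powr (1 - b) / (b - 1)"
proof -
  define U where "U k = real k powr (1 - b) / (b - 1)" for k :: nat
  have step: "(real (j + J) + 1) powr (-b) \<le> U (j + J) - U (Suc (j + J))" for j
  proof -
    have jp: "0 < real (j + J)" using J by simp
    then obtain z where z: "real (j + J) < z" "z < real (j + J) + 1"
      and eq: "(real (j + J) + 1) powr (1 - b) - real (j + J) powr (1 - b) = (1 - b) * z powr (-b)"
      using powr_diff_mean_value[of "real (j + J)" "real (j + J) + 1" "1 - b"] by auto
    have "(real (j + J) + 1) powr (-b) \<le> z powr (-b)"
      using z jp b by (intro powr_mono2') auto
    also have "\<dots> = U (j + J) - U (Suc (j + J))"
    proof -
      have "(b - 1) * z powr (-b) = real (j + J) powr (1 - b) - (real (j + J) + 1) powr (1 - b)"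
        using eq by (simp add: algebra_simps)
      then have "z powr (-b) = (real (j + J) powr (1 - b) - (real (j + J) + 1) powr (1 - b)) / (b - 1)"
        using b by (simp add: field_simps)
      then show ?thesis unfolding U_def by (simp add: diff_divide_distrib add.commute)
    qed
    finally show ?thesis .
  qed
  have "(\<lambda>n. U (n + J)) \<longlonglongrightarrow> 0"
  proof -
    have "filterlim (\<lambda>n. real (n + J)) at_top sequentially"
      by (rule filterlim_at_top_mono[OF filterlim_real_sequentially always_eventually]) simp
    then have "(\<lambda>n. real (n + J) powr (1 - b)) \<longlonglongrightarrow> 0"
      using b by (intro tendsto_neg_powr) auto
    then show ?thesis unfolding U_def by (intro tendsto_divide_zero)
  qed
  then have sums: "(\<lambda>n. U (n + J) - U (Suc n + J)) sums (U (0 + J) - 0)"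
    by (rule telescope_sums')
  have "summable (\<lambda>j. (real (j + J) + 1) powr (-b))"
    using summable_iff_shift[of "\<lambda>j. (real j + 1) powr (-b)" J] summable_shifted_powr[OF b]
    by simp
  then have "(\<Sum>j. (real (j + J) + 1) powr (-b)) \<le> (\<Sum>j. U (j + J) - U (Suc (j + J)))"
    using sums by (intro suminf_le step) (auto simp: sums_summable)
  also have "\<dots> = U J" using sums by (simp add: sums_iff)
  finally show ?thesis unfolding U_def .
qed

lemma powr_le_of_poly_decay:
  fixes X b q y :: real
  assumes "0 \<le> y" "y \<le> X * (real j + 1) powr (-b)" "0 \<le> q" "0 \<le> X"
  shows "y powr q \<le> X powr q * (real j + 1) powr (-(b*q))"
proof -
  have "y powr q \<le> (X * (real j + 1) powr (-b)) powr q" using assms by (intro powr_mono2) auto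
  also have "\<dots> = X powr q * (real j + 1) powr (-(b*q))"
    using assms by (simp add: powr_mult powr_powr)
  finally show ?thesis .
qed

lemma suminf_powr_le_of_poly_decay:
  fixes b q K X :: real and y :: "nat \<Rightarrow> real"
  assumes q: "0 < q" and qb: "1 < q * b" and K: "0 \<le> K" and X: "0 \<le> X"
    and y0: "\<And>j. 0 \<le> y j" and yX: "\<And>j. y j \<le> X * (real j + 1) powr (-b)"
  shows "summable (\<lambda>j. K * y j powr q)"
    and "(\<Sum>j. K * y j powr q) \<le> K * X powr q * (\<Sum>j. (real j + 1) powr (-(b*q)))"
proof -
  have s: "summable (\<lambda>j. K * X powr q * (real j + 1) powr (-(b*q)))"
    using qb by (intro summable_mult summable_shifted_powr) (simp add: mult.commute)
  have le: "K * y j powr q \<le> K * X powr q * (real j + 1) powr (-(b*q))" for j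
    using powr_le_of_poly_decay[OF y0 yX, of q j] q X K by (auto simp: mult.assoc intro!: mult_left_mono)
  show sm: "summable (\<lambda>j. K * y j powr q)"
    by (rule summable_comparison_test'[OF s, of 0]) (use le K in auto)
  have "(\<Sum>j. K * y j powr q) \<le> (\<Sum>j. K * X powr q * (real j + 1) powr (-(b*q)))"
    by (rule suminf_le[OF le sm s])
  also have "\<dots> = K * X powr q * (\<Sum>j. (real j + 1) powr (-(b*q)))"
    using qb by (intro suminf_mult summable_shifted_powr) (simp add: mult.commute)
  finally show "(\<Sum>j. K * y j powr q) \<le> K * X powr q * (\<Sum>j. (real j + 1) powr (-(b*q)))" .
qed

lemma sum_powr_head_le:
  fixes b p K X :: real
  assumes b: "0 < b" and p: "0 < p" and pb: "p * b < 1" and K: "0 \<le> K" and X: "0 < X"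
    and J: "real J \<le> X powr (1/b)"
  shows "K * X powr p * (\<Sum>j<J. (real j + 1) powr (-(p*b))) \<le> K / (1 - p*b) * X powr (1/b)"
proof -
  have "K * X powr p * (\<Sum>j<J. (real j + 1) powr (-(p*b)))
      \<le> K * X powr p * (real J powr (1 - p*b) / (1 - p*b))"
    using sum_shifted_powr_le[of "p*b" J] p b pb K by (intro mult_left_mono) auto
  also have "\<dots> \<le> K * X powr p * ((X powr (1/b)) powr (1 - p*b) / (1 - p*b))"
    using J pb K by (intro mult_left_mono divide_right_mono powr_mono2) auto
  also have "(X powr (1/b)) powr (1 - p*b) = X powr ((1 - p*b) / b)" by (simp add: powr_powr)
  also have "K * X powr p * (X powr ((1 - p*b) / b) / (1 - p*b)) = K / (1 - p*b) * X powr (1/b)"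
  proof -
    have "X powr p * X powr ((1 - p*b) / b) = X powr (1/b)"
      using b by (simp add: powr_add[symmetric] field_simps)
    then show ?thesis by (simp add: field_simps)
  qed
  finally show ?thesis .
qed

lemma suminf_sq_tail_le:
  fixes b X :: real and J :: nat
  assumes b: "1 < b" and X: "0 < X" and J: "1 \<le> J" and XJ: "X powr (1/b) \<le> 2 * real J"
  shows "X\<^sup>2 * (\<Sum>j. (real (j + J) + 1) powr (-(2*b))) \<le> 2 powr (2*b - 1) / (2*b - 1) * X powr (1/b)"
proof -
  define R where "R = X powr (1/b)"
  have R: "0 < R" unfolding R_def using X by simp
  have "X\<^sup>2 * (\<Sum>j. (real (j + J) + 1) powr (-(2*b))) \<le> X\<^sup>2 * (real J powr (1 - 2*b) / (2*b - 1))"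
    using suminf_shifted_powr_tail_le[of "2*b" J] b J by (intro mult_left_mono) auto
  also have "\<dots> \<le> X\<^sup>2 * ((R / 2) powr (1 - 2*b) / (2*b - 1))"
    using XJ R b unfolding R_def[symmetric] by (intro mult_left_mono divide_right_mono powr_mono2') auto
  also have "\<dots> = 2 powr (2*b - 1) / (2*b - 1) * X powr (1/b)"
  proof -
    have a: "(R / 2) powr (1 - 2*b) = R powr (1 - 2*b) / 2 powr (1 - 2*b)"
      using R by (simp add: powr_divide)
    have b': "R powr (1 - 2*b) = X powr ((1 - 2*b) / b)" unfolding R_def by (simp add: powr_powr)
    have c: "1 / 2 powr (1 - 2*b) = 2 powr (2*b - 1)"
      using powr_minus_divide[of 2 "1 - 2*b"] by simp
    have d: "X\<^sup>2 * X powr ((1 - 2*b) / b) = X powr (1/b)"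
    proof -
      have "X\<^sup>2 * X powr ((1 - 2*b) / b) = X powr (2 + (1 - 2*b) / b)"
        using X by (simp add: powr_add powr_realpow)
      also have "2 + (1 - 2*b) / b = 1 / b" using b by (simp add: field_simps)
      finally show ?thesis .
    qed
    have "X\<^sup>2 * ((R / 2) powr (1 - 2*b) / (2*b - 1))
        = (X\<^sup>2 * X powr ((1 - 2*b) / b)) * (1 / 2 powr (1 - 2*b)) / (2*b - 1)"
      unfolding a b' by simp
    then show ?thesis unfolding c d by (simp add: mult.commute)
  qed
  finally show ?thesis .
qed

definition capacity_const :: "real \<Rightarrow> real \<Rightarrow> real \<Rightarrow> real" where
  "capacity_const b p K =
     (\<Sum>j. (real j + 1) powr (-(2*b))) + K / (1 - p * b) + 2 powr (2*b - 1) / (2*b - 1)"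

lemma capacity_const_nonneg:
  assumes "1 < b" "p * b < 1" "0 \<le> K"
  shows "0 \<le> capacity_const b p K"
proof -
  have "0 \<le> (\<Sum>j. (real j + 1) powr (-(2*b)))"
    using assms by (intro suminf_nonneg summable_shifted_powr) auto
  then show ?thesis unfolding capacity_const_def using assms by simp
qed

lemma sq_le_of_poly_decay:
  fixes X b y :: real
  assumes "0 \<le> y" and "y \<le> X * (real j + 1) powr (-b)"
  shows "y\<^sup>2 \<le> X\<^sup>2 * (real j + 1) powr (-(2*b))"
proof -
  have "y\<^sup>2 \<le> (X * (real j + 1) powr (-b))\<^sup>2" using assms by (intro power_mono) auto
  also have "\<dots> = X\<^sup>2 * (real j + 1) powr (-(2*b))"
    by (simp add: power_mult_distrib power2_eq_square powr_add[symmetric])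
  finally show ?thesis .
qed

lemma summable_min_sq_powr_of_poly_decay:
  fixes b p K X :: real and y :: "nat \<Rightarrow> real"
  assumes b: "1 < b" and K: "0 \<le> K"
    and y0: "\<And>j. 0 \<le> y j" and yX: "\<And>j. y j \<le> X * (real j + 1) powr (-b)"
  shows "summable (\<lambda>j. min ((y j)\<^sup>2) (K * y j powr p))"
proof (rule summable_comparison_test'[of "\<lambda>j. X\<^sup>2 * (real j + 1) powr (-(2*b))" 0])
  show "summable (\<lambda>j. X\<^sup>2 * (real j + 1) powr (-(2*b)))"
    using b by (intro summable_mult summable_shifted_powr) simp
  show "norm (min ((y j)\<^sup>2) (K * y j powr p)) \<le> X\<^sup>2 * (real j + 1) powr (-(2*b))" for j
    using sq_le_of_poly_decay[OF y0 yX, of j] y0[of j] K by simp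
qed

text \<open>Split at \<open>J \<approx> X powr (1/b)\<close>: the indices \<open>j < J\<close> are charged \<open>K y powr p\<close> and the
  remaining ones \<open>y\<^sup>2\<close>.\<close>

lemma suminf_min_sq_powr_le_of_poly_decay_large:
  fixes b p K X :: real and y :: "nat \<Rightarrow> real"
  assumes b: "1 < b" and p: "0 < p" and pb: "p * b < 1" and K: "0 \<le> K" and X: "1 < X"
    and y0: "\<And>j. 0 \<le> y j" and yX: "\<And>j. y j \<le> X * (real j + 1) powr (-b)"
  shows "(\<Sum>j. min ((y j)\<^sup>2) (K * y j powr p))
       \<le> (2 powr (2*b - 1) / (2*b - 1) + K / (1 - p * b)) * X powr (1/b)"
proof -
  define f where "f j = min ((y j)\<^sup>2) (K * y j powr p)" for j
  define J where "J = nat \<lfloor>X powr (1/b)\<rfloor>"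
  have sf: "summable f" unfolding f_def by (rule summable_min_sq_powr_of_poly_decay[OF b K y0 yX])
  have R1: "1 < X powr (1/b)" using X b by (intro gr_one_powr) auto
  have J: "real J \<le> X powr (1/b)" "X powr (1/b) < real J + 1" "1 \<le> J"
    unfolding J_def using R1 by linarith+
  have head: "(\<Sum>j<J. f j) \<le> K / (1 - p * b) * X powr (1/b)"
  proof -
    have "(\<Sum>j<J. f j) \<le> (\<Sum>j<J. K * (X powr p * (real j + 1) powr (-(p*b))))"
    proof (intro sum_mono)
      fix j
      have "f j \<le> K * y j powr p" unfolding f_def by simp
      also have "\<dots> \<le> K * (X powr p * (real j + 1) powr (-(p*b)))"
        using powr_le_of_poly_decay[OF y0 yX, of p j] p X K by (auto simp: mult_ac intro!: mult_left_mono)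
      finally show "f j \<le> K * (X powr p * (real j + 1) powr (-(p*b)))" .
    qed
    also have "\<dots> = K * X powr p * (\<Sum>j<J. (real j + 1) powr (-(p*b)))"
      by (simp add: sum_distrib_left mult_ac)
    also have "\<dots> \<le> K / (1 - p * b) * X powr (1/b)"
      using b p pb K X J by (intro sum_powr_head_le) auto
    finally show ?thesis .
  qed
  have tail: "(\<Sum>j. f (j + J)) \<le> 2 powr (2*b - 1) / (2*b - 1) * X powr (1/b)"
  proof -
    have sJ: "summable (\<lambda>j. (real (j + J) + 1) powr (-(2*b)))"
      using summable_iff_shift[of "\<lambda>j. (real j + 1) powr (-(2*b))" J] summable_shifted_powr[of "2*b"] b
      by simp
    have "(\<Sum>j. f (j + J)) \<le> (\<Sum>j. X\<^sup>2 * (real (j + J) + 1) powr (-(2*b)))"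
    proof (rule suminf_le)
      show "f (j + J) \<le> X\<^sup>2 * (real (j + J) + 1) powr (-(2*b))" for j
        unfolding f_def using sq_le_of_poly_decay[OF y0 yX, of "j + J"] by simp
      show "summable (\<lambda>j. f (j + J))" using sf by (subst summable_iff_shift)
    qed (use sJ in \<open>rule summable_mult\<close>)
    also have "\<dots> = X\<^sup>2 * (\<Sum>j. (real (j + J) + 1) powr (-(2*b)))" using sJ by (rule suminf_mult)
    also have "\<dots> \<le> 2 powr (2*b - 1) / (2*b - 1) * X powr (1/b)"
      using J X by (intro suminf_sq_tail_le b) auto
    finally show ?thesis .
  qed
  have "(\<Sum>j. f j) = (\<Sum>j. f (j + J)) + (\<Sum>j<J. f j)"
    using sf by (rule suminf_split_initial_segment)
  also have "\<dots> \<le> (2 powr (2*b - 1) / (2*b - 1) + K / (1 - p * b)) * X powr (1/b)"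
    using head tail by (simp add: distrib_right)
  finally show ?thesis unfolding f_def .
qed

lemma suminf_min_sq_powr_le_of_poly_decay:
  fixes b p K X :: real and y :: "nat \<Rightarrow> real"
  assumes b: "1 < b" and p: "0 < p" and pb: "p * b < 1" and K: "0 \<le> K" and X: "0 \<le> X"
    and y0: "\<And>j. 0 \<le> y j" and yX: "\<And>j. y j \<le> X * (real j + 1) powr (-b)"
  shows "(\<Sum>j. min ((y j)\<^sup>2) (K * y j powr p)) \<le> capacity_const b p K * X powr (1/b)"
proof (cases "X \<le> 1")
  case True
  define Z where "Z = (\<Sum>j. (real j + 1) powr (-(2*b)))"
  have sZ: "summable (\<lambda>j. (real j + 1) powr (-(2*b)))" using b by (intro summable_shifted_powr) simp
  have Z: "0 \<le> Z" unfolding Z_def using sZ by (intro suminf_nonneg) auto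
  have "(\<Sum>j. min ((y j)\<^sup>2) (K * y j powr p)) \<le> (\<Sum>j. X\<^sup>2 * (real j + 1) powr (-(2*b)))"
    using sq_le_of_poly_decay[OF y0 yX] summable_min_sq_powr_of_poly_decay[OF b K y0 yX] sZ
    by (intro suminf_le summable_mult) (auto intro: min.coboundedI1)
  also have "\<dots> = X\<^sup>2 * Z" unfolding Z_def using sZ by (rule suminf_mult)
  also have "\<dots> \<le> X powr (1/b) * Z"
  proof (cases "X = 0")
    case False
    then have "X\<^sup>2 = X powr 2" using X by (simp add: powr_realpow)
    also have "\<dots> \<le> X powr (1/b)" using False X True b by (intro powr_mono') (auto simp: field_simps)
    finally show ?thesis using Z by (rule mult_right_mono)
  qed simp
  also have "\<dots> \<le> capacity_const b p K * X powr (1/b)"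
  proof -
    have "Z \<le> capacity_const b p K" unfolding capacity_const_def Z_def[symmetric] using K pb b by simp
    then show ?thesis by (simp add: mult.commute mult_right_mono)
  qed
  finally show ?thesis .
next
  case False
  have "0 \<le> (\<Sum>j. (real j + 1) powr (-(2*b)))"
    using b by (intro suminf_nonneg summable_shifted_powr) auto
  then have "2 powr (2*b - 1) / (2*b - 1) + K / (1 - p * b) \<le> capacity_const b p K"
    unfolding capacity_const_def by simp
  then show ?thesis
    using False by (intro order.trans[OF suminf_min_sq_powr_le_of_poly_decay_large[OF b p pb K _ y0 yX]]
        mult_right_mono) auto
qed

lemma powr_scale_div:
  fixes x N q t :: real
  assumes x: "0 \<le> x" and N: "0 < N"
  shows "(x * N powr t) powr q / N = x powr q * N powr (t * q - 1)"
  using assms by (simp add: powr_mult powr_powr powr_diff)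

lemma bias_scale_eq:
  fixes N al c0 s g :: real
  assumes N: "0 < N" and c0: "0 < c0" and s: "0 < s"
  shows "(s / (c0 * N powr (-al) * N / 2 * (1/2) powr g)) powr s
       = (2 * s / (c0 * (1/2) powr g)) powr s * N powr (-((1 - al) * s))"
proof -
  have "c0 * N powr (-al) * N / 2 * (1/2) powr g = (c0 * (1/2) powr g / 2) * N powr (1 - al)"
    using N by (simp add: powr_diff powr_minus field_simps)
  moreover have "N powr (-(1 - al)) = 1 / N powr (1 - al)" by (rule powr_minus_divide)
  moreover have "0 < N powr (1 - al)" "0 < (1/2::real) powr g" using N by auto
  ultimately have "s / (c0 * N powr (-al) * N / 2 * (1/2) powr g) = (2 * s / (c0 * (1/2) powr g)) * N powr (-(1 - al))"
    using c0 by (simp add: field_simps)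
  then have "(s / (c0 * N powr (-al) * N / 2 * (1/2) powr g)) powr s
      = ((2 * s / (c0 * (1/2) powr g)) * N powr (-(1 - al))) powr s"
    by simp
  also have "\<dots> = (2 * s / (c0 * (1/2) powr g)) powr s * (N powr (-(1 - al))) powr s"
    using c0 s N by (intro powr_mult)
  also have "(N powr (-(1 - al))) powr s = N powr (-((1 - al) * s))" by (simp add: powr_powr algebra_simps)
  finally show ?thesis .
qed

lemma ennreal_half_bias_variance_le:
  fixes b K w :: real and V :: ennreal
  assumes b: "0 \<le> b" and K: "0 \<le> K" and w: "0 \<le> w" and V: "V \<le> ennreal w"
  shows "ennreal (1/2) * (ennreal b + 2 * ennreal K * V) \<le> ennreal (1/2 * (b + 2 * K * w))"
proof -
  have "ennreal (1/2) * (ennreal b + 2 * ennreal K * V) \<le> ennreal (1/2) * (ennreal b + 2 * ennreal K * ennreal w)"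
    by (intro mult_left_mono add_mono order.refl V) auto
  also have "ennreal (1/2) * (ennreal b + 2 * ennreal K * ennreal w) = ennreal (1/2) * ennreal (b + 2 * K * w)"
    using b K w by (simp add: ennreal_plus ennreal_mult)
  also have "\<dots> = ennreal (1/2 * (b + 2 * K * w))"
    using b K w by (intro ennreal_mult[symmetric]) auto
  finally show ?thesis .
qed

section \<open>Linear recursions with varying contraction factors\<close>

definition decay_prod :: "(nat \<Rightarrow> real) \<Rightarrow> real \<Rightarrow> nat \<Rightarrow> nat \<Rightarrow> real" where
  "decay_prod e l a b = (\<Prod>m\<in>{a..<b}. 1 - e m * l)"

definition noise_weight :: "(nat \<Rightarrow> real) \<Rightarrow> real \<Rightarrow> nat \<Rightarrow> real" where
  "noise_weight e l k = (\<Sum>i<k. (e i)\<^sup>2 * l * decay_prod e l (Suc i) k)"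

lemma decay_prod_Suc: "a \<le> k \<Longrightarrow> decay_prod e l a (Suc k) = decay_prod e l a k * (1 - e k * l)"
  unfolding decay_prod_def by (simp add: prod.atLeastLessThan_Suc)

lemma decay_prod_same [simp]: "decay_prod e l k k = 1"
  unfolding decay_prod_def by simp

lemma decay_prod_nonneg: "(\<And>m. e m * l \<le> 1) \<Longrightarrow> 0 \<le> decay_prod e l a b"
  unfolding decay_prod_def by (intro prod_nonneg) (auto simp: algebra_simps)

lemma decay_prod_le_one: "(\<And>m. e m * l \<le> 1) \<Longrightarrow> (\<And>m. 0 \<le> e m * l) \<Longrightarrow> decay_prod e l a b \<le> 1"
  unfolding decay_prod_def by (intro prod_le_1) (auto simp: algebra_simps)

lemma decay_prod_le_exp:
  assumes "\<And>m. e m * l \<le> 1"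
  shows "decay_prod e l a b \<le> exp (- l * (\<Sum>m\<in>{a..<b}. e m))"
proof -
  have "decay_prod e l a b \<le> (\<Prod>m\<in>{a..<b}. exp (- (e m * l)))"
    unfolding decay_prod_def
  proof (rule prod_mono)
    fix m
    show "0 \<le> 1 - e m * l \<and> 1 - e m * l \<le> exp (- (e m * l))"
      using assms[of m] exp_ge_add_one_self[of "- (e m * l)"] by simp
  qed
  also have "\<dots> = exp (- l * (\<Sum>m\<in>{a..<b}. e m))"
    by (simp add: exp_sum[symmetric] sum_distrib_left sum_negf mult.commute)
  finally show ?thesis .
qed

lemma sum_decay_prod_telescope:
  "(\<Sum>i<k. e i * l * decay_prod e l (Suc i) k) = 1 - decay_prod e l 0 k"
proof (induction k)
  case 0 then show ?case by (simp add: decay_prod_def)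
next
  case (Suc k)
  have "(\<Sum>i<Suc k. e i * l * decay_prod e l (Suc i) (Suc k))
      = (\<Sum>i<k. e i * l * decay_prod e l (Suc i) k) * (1 - e k * l) + e k * l"
    by (simp add: sum_distrib_left sum_distrib_right decay_prod_Suc mult_ac)
  also have "\<dots> = 1 - decay_prod e l 0 (Suc k)"
    by (simp only: Suc.IH decay_prod_Suc[OF le0]) (simp add: algebra_simps)
  finally show ?case .
qed

lemma noise_weight_nonneg:
  assumes "\<And>k. e k * l \<le> 1" and "0 \<le> l"
  shows "0 \<le> noise_weight e l k"
  unfolding noise_weight_def using decay_prod_nonneg[OF assms(1)] assms(2) by (intro sum_nonneg) simp

lemma noise_weight_le:
  assumes el: "\<And>k. e k * l \<le> 1" and l: "0 \<le> l" and e0: "\<And>k. 0 \<le> e k" and ec: "\<And>k. e k \<le> c"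
  shows "noise_weight e l k \<le> c"
proof -
  have "noise_weight e l k \<le> (\<Sum>i<k. c * (e i * l * decay_prod e l (Suc i) k))"
    unfolding noise_weight_def
  proof (intro sum_mono)
    fix i
    have "0 \<le> e i * l * decay_prod e l (Suc i) k" using e0[of i] l decay_prod_nonneg[OF el] by simp
    from mult_right_mono[OF ec[of i] this]
    show "(e i)\<^sup>2 * l * decay_prod e l (Suc i) k \<le> c * (e i * l * decay_prod e l (Suc i) k)"
      by (simp add: power2_eq_square mult_ac)
  qed
  also have "\<dots> = c * (1 - decay_prod e l 0 k)"
    by (simp add: sum_distrib_left[symmetric] sum_decay_prod_telescope)
  also have "\<dots> \<le> c"
    using e0[of 0] ec[of 0] decay_prod_nonneg[OF el] by (simp add: mult_left_le)
  finally show ?thesis .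
qed

lemma ennreal_recursion_unroll:
  fixes D V :: "nat \<Rightarrow> ennreal"
  assumes el: "\<And>k. e k * l \<le> 1" and l: "0 \<le> l"
    and rec: "\<And>k. D (Suc k) \<le> ennreal (1 - e k * l) * D k + ennreal ((e k)\<^sup>2 * l) * V k"
  shows "D k \<le> ennreal (decay_prod e l 0 k) * D 0
              + (\<Sum>i<k. ennreal ((e i)\<^sup>2 * l * decay_prod e l (Suc i) k) * V i)"
proof (induction k)
  case 0 then show ?case by simp
next
  case (Suc k)
  have "D (Suc k) \<le> ennreal (1 - e k * l) * D k + ennreal ((e k)\<^sup>2 * l) * V k" by (rule rec)
  also have "\<dots> \<le> ennreal (1 - e k * l) * (ennreal (decay_prod e l 0 k) * D 0
         + (\<Sum>i<k. ennreal ((e i)\<^sup>2 * l * decay_prod e l (Suc i) k) * V i))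
       + ennreal ((e k)\<^sup>2 * l) * V k"
    by (intro add_mono mult_left_mono Suc.IH) auto
  also have "\<dots> = ennreal (decay_prod e l 0 (Suc k)) * D 0
       + (\<Sum>i<Suc k. ennreal ((e i)\<^sup>2 * l * decay_prod e l (Suc i) (Suc k)) * V i)"
    using el[of k] decay_prod_nonneg[OF el] l
    by (simp add: distrib_left sum_distrib_left decay_prod_Suc ennreal_mult[symmetric] mult_ac)
  finally show ?case .
qed

lemma weighted_error_le_of_noise_bound:
  fixes D :: "nat \<Rightarrow> nat \<Rightarrow> ennreal" and V :: "nat \<Rightarrow> ennreal" and lam eta :: "nat \<Rightarrow> real"
  assumes lam: "\<And>j. 0 \<le> lam j" and el: "\<And>j k. eta k * lam j \<le> 1"
    and rec: "\<And>j k. D j (Suc k) \<le> ennreal (1 - eta k * lam j) * D j k + ennreal ((eta k)\<^sup>2 * lam j) * V k"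
    and VM: "\<And>i. i < k \<Longrightarrow> V i \<le> M"
  shows "(\<Sum>j. ennreal (lam j) * D j k)
       \<le> (\<Sum>j. ennreal (lam j * decay_prod eta (lam j) 0 k) * D j 0)
         + (\<Sum>j. ennreal (lam j * noise_weight eta (lam j) k)) * M"
proof -
  have "ennreal (lam j) * D j k
      \<le> ennreal (lam j * decay_prod eta (lam j) 0 k) * D j 0 + ennreal (lam j * noise_weight eta (lam j) k) * M"
    for j
  proof -
    have P: "0 \<le> decay_prod eta (lam j) a b" for a b by (rule decay_prod_nonneg[OF el])
    have "ennreal (lam j) * D j k \<le> ennreal (lam j) * (ennreal (decay_prod eta (lam j) 0 k) * D j 0
          + (\<Sum>i<k. ennreal ((eta i)\<^sup>2 * lam j * decay_prod eta (lam j) (Suc i) k) * V i))"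
      using el lam rec by (intro mult_left_mono ennreal_recursion_unroll) auto
    also have "\<dots> \<le> ennreal (lam j) * (ennreal (decay_prod eta (lam j) 0 k) * D j 0
          + (\<Sum>i<k. ennreal ((eta i)\<^sup>2 * lam j * decay_prod eta (lam j) (Suc i) k)) * M)"
      unfolding sum_distrib_right by (intro mult_left_mono add_mono order.refl sum_mono) (auto intro: VM)
    also have "(\<Sum>i<k. ennreal ((eta i)\<^sup>2 * lam j * decay_prod eta (lam j) (Suc i) k))
        = ennreal (noise_weight eta (lam j) k)"
      unfolding noise_weight_def using lam[of j] P by (subst sum_ennreal) auto
    moreover have "0 \<le> noise_weight eta (lam j) k" using el lam by (intro noise_weight_nonneg)
    ultimately show ?thesis
      using lam[of j] P[of 0 k]
      by (simp add: distrib_left ennreal_mult mult_ac)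
  qed
  then have "(\<Sum>j. ennreal (lam j) * D j k)
      \<le> (\<Sum>j. ennreal (lam j * decay_prod eta (lam j) 0 k) * D j 0 + ennreal (lam j * noise_weight eta (lam j) k) * M)"
    by (intro suminf_le) auto
  also have "\<dots> = (\<Sum>j. ennreal (lam j * decay_prod eta (lam j) 0 k) * D j 0)
      + (\<Sum>j. ennreal (lam j * noise_weight eta (lam j) k)) * M"
    by (simp add: suminf_add[symmetric] ennreal_suminf_multc)
  finally show ?thesis .
qed

text \<open>The noise level \<open>C W k + sg\<close> feeds back into \<open>W\<close>; since \<open>C T \<le> 1/2\<close>, strong induction
  keeps it below twice its initial value.\<close>

lemma ennreal_feedback_le:
  fixes W :: "nat \<Rightarrow> ennreal" and W0 sg :: ennreal and C T :: real
  assumes C: "0 \<le> C" and T: "0 \<le> T" and CT: "C * T \<le> 1/2"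
    and W: "\<And>k M. (\<And>i. i < k \<Longrightarrow> ennreal C * W i + sg \<le> M) \<Longrightarrow> W k \<le> W0 + ennreal T * M"
  shows "ennreal C * W k + sg \<le> 2 * (ennreal C * W0 + sg)"
proof (induction k rule: less_induct)
  case (less k)
  define K0 where "K0 = ennreal C * W0 + sg"
  have "ennreal C * W k + sg \<le> ennreal C * (W0 + ennreal T * (2 * K0)) + sg"
    using W[of k "2 * K0"] less unfolding K0_def by (intro add_mono mult_left_mono) auto
  also have "\<dots> = K0 + ennreal (C * T) * (2 * K0)"
    unfolding K0_def using C T by (simp add: ennreal_mult distrib_left add_ac mult_ac)
  also have "\<dots> \<le> K0 + ennreal (1/2) * (2 * K0)"
    using CT by (intro add_mono mult_right_mono ennreal_leI) auto
  also have "\<dots> = 2 * K0"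
  proof -
    have "ennreal (1/2) * 2 = 1" using ennreal_mult[of "1/2::real" 2, symmetric] by simp
    then have "K0 + ennreal (1/2) * (2 * K0) = K0 + 1 * K0" by (simp only: mult.assoc[symmetric])
    then show ?thesis by (simp add: mult_2)
  qed
  finally show ?case unfolding K0_def .
qed

lemma weighted_error_le:
  fixes D :: "nat \<Rightarrow> nat \<Rightarrow> ennreal" and lam eta :: "nat \<Rightarrow> real"
  assumes lam: "\<And>j. 0 \<le> lam j" and lsum: "summable lam"
    and eta0: "\<And>k. 0 \<le> eta k" and etac: "\<And>k. eta k \<le> c" and el: "\<And>j k. eta k * lam j \<le> 1"
    and C: "0 \<le> C" and cT: "C * c * (\<Sum>j. lam j) \<le> 1/2"
    and rec: "\<And>j k. D j (Suc k) \<le> ennreal (1 - eta k * lam j) * D j k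
         + ennreal ((eta k)\<^sup>2) * (ennreal C * ennreal (lam j) * (\<Sum>i. ennreal (lam i) * D i k))
         + ennreal ((eta k)\<^sup>2 * sg\<^sup>2) * ennreal (lam j)"
  shows "(\<Sum>j. ennreal (lam j) * D j N)
       \<le> (\<Sum>j. ennreal (lam j * decay_prod eta (lam j) 0 N) * D j 0)
         + 2 * (ennreal C * (\<Sum>j. ennreal (lam j) * D j 0) + ennreal (sg\<^sup>2))
             * (\<Sum>j. ennreal (lam j * noise_weight eta (lam j) N))"
proof -
  define W where "W k = (\<Sum>i. ennreal (lam i) * D i k)" for k
  define V where "V k = ennreal C * W k + ennreal (sg\<^sup>2)" for k
  define T where "T = c * (\<Sum>j. lam j)"
  have T: "0 \<le> T"
    unfolding T_def using etac[of 0] eta0[of 0] lam lsum by (intro mult_nonneg_nonneg suminf_nonneg) auto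
  have rec': "D j (Suc k) \<le> ennreal (1 - eta k * lam j) * D j k + ennreal ((eta k)\<^sup>2 * lam j) * V k" for j k
  proof -
    have "ennreal ((eta k)\<^sup>2) * (ennreal C * ennreal (lam j) * W k) + ennreal ((eta k)\<^sup>2 * sg\<^sup>2) * ennreal (lam j)
        = ennreal ((eta k)\<^sup>2 * lam j) * V k"
      unfolding V_def using lam[of j] by (simp add: ennreal_mult distrib_left mult_ac)
    then show ?thesis using rec[of j k] unfolding W_def by (simp add: add.assoc)
  qed
  have bias: "(\<Sum>j. ennreal (lam j * decay_prod eta (lam j) 0 k) * D j 0) \<le> W 0" for k
    unfolding W_def using lam decay_prod_le_one[OF el] eta0
    by (intro suminf_le allI mult_right_mono ennreal_leI) (auto intro!: mult_left_le)
  have noise: "(\<Sum>j. ennreal (lam j * noise_weight eta (lam j) k)) \<le> ennreal T" for k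
  proof -
    have "(\<Sum>j. ennreal (lam j * noise_weight eta (lam j) k)) \<le> (\<Sum>j. ennreal (c * lam j))"
      using mult_left_mono[OF noise_weight_le[OF el lam eta0 etac] lam]
      by (intro suminf_le allI ennreal_leI) (auto simp: mult.commute)
    also have "\<dots> = ennreal T"
      unfolding T_def using lsum lam etac[of 0] eta0[of 0]
      by (subst suminf_ennreal2) (auto intro: summable_mult simp: suminf_mult)
    finally show ?thesis .
  qed
  have "V k \<le> 2 * V 0" for k
    unfolding V_def
  proof (rule ennreal_feedback_le[OF C T])
    show "C * T \<le> 1/2" using cT by (simp add: T_def mult_ac)
    show "W k \<le> W 0 + ennreal T * M" if "\<And>i. i < k \<Longrightarrow> ennreal C * W i + ennreal (sg\<^sup>2) \<le> M" for k M
      using weighted_error_le_of_noise_bound[where D=D and V=V and k=k and M=M, OF lam el rec']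
        that bias[of k] noise[of k]
      unfolding V_def W_def[symmetric] by (meson add_mono mult_right_mono order.trans zero_le)
  qed
  then show ?thesis
    using weighted_error_le_of_noise_bound[where D=D and V=V and k=N and M="2 * V 0", OF lam el rec']
    unfolding W_def V_def by (simp add: mult_ac)
qed

section \<open>The polynomially decaying step size\<close>

definition poly_decay_schedule :: "real \<Rightarrow> real \<Rightarrow> nat \<Rightarrow> nat \<Rightarrow> real" where
  "poly_decay_schedule eta0 g N k = (if k < N then eta0 * (1 - real k / real N) powr g else 0)"

lemma poly_decay_schedule_nonneg: "0 \<le> eta0 \<Longrightarrow> 0 \<le> poly_decay_schedule eta0 g N k"
  unfolding poly_decay_schedule_def by simp

lemma poly_decay_schedule_le: 
  assumes "0 \<le> eta0" "0 \<le> g"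
  shows "poly_decay_schedule eta0 g N k \<le> eta0"
proof (cases "k < N")
  case True
  then have "(1 - real k / real N) powr g \<le> 1"
    using assms powr_mono2[of g "1 - real k / real N" 1] by (auto simp: field_simps)
  then show ?thesis using True assms by (simp add: poly_decay_schedule_def mult_left_le)
qed (use assms in \<open>simp add: poly_decay_schedule_def\<close>)

lemma sum_poly_decay_ge:
  fixes N l :: nat and g :: real
  assumes lN: "l \<le> N" and g: "0 \<le> g"
  shows "(\<Sum>m\<in>{l..<N}. (1 - real m / real N) powr g) \<ge> (real (N - l) / 2) * ((real (N - l) / 2) / real N) powr g"
proof -
  define n where "n = N - l"
  define Q where "Q = {l..<l + (n - n div 2)}"
  have "(\<Sum>m\<in>{l..<N}. (1 - real m / real N) powr g) \<ge> (\<Sum>m\<in>Q. (1 - real m / real N) powr g)"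
    by (rule sum_mono2) (auto simp: Q_def n_def)
  moreover have "(\<Sum>m\<in>Q. (1 - real m / real N) powr g) \<ge> (\<Sum>m\<in>Q. ((real n / 2) / real N) powr g)"
  proof (intro sum_mono powr_mono2[OF g])
    fix m assume m: "m \<in> Q"
    then have "m < N" "N - m \<ge> n div 2 + 1" unfolding Q_def n_def by auto
    then have "real N - real m \<ge> real n / 2" "real N > 0" by linarith+
    then show "real n / 2 / real N \<le> 1 - real m / real N" by (simp add: field_simps)
  qed simp
  moreover have "(\<Sum>m\<in>Q. ((real n / 2) / real N) powr g) = real (n - n div 2) * ((real n / 2) / real N) powr g"
    unfolding Q_def by simp
  moreover have "real (n - n div 2) \<ge> real n / 2" by linarith
  ultimately show ?thesis unfolding n_def[symmetric]
    by (smt (verit, best) mult_right_mono powr_ge_zero)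
qed

lemma lam_noise_weight_le_sq:
  fixes N :: nat and eta0 g lam :: real
  assumes N: "1 \<le> N" and g: "0 \<le> g" and e0: "0 < eta0" and l0: "0 \<le> lam" and el: "eta0 * lam \<le> 1"
  shows "lam * noise_weight (poly_decay_schedule eta0 g N) lam N \<le> (lam * eta0 * real N)\<^sup>2 / real N"
proof -
  define e where "e = poly_decay_schedule eta0 g N"
  have e_nn: "0 \<le> e k" for k unfolding e_def using e0 by (simp add: poly_decay_schedule_nonneg)
  have e_le: "e k \<le> eta0" for k unfolding e_def using e0 g by (simp add: poly_decay_schedule_le)
  have el1: "e k * lam \<le> 1" for k using mult_right_mono[OF e_le[of k] l0] el by simp
  have "noise_weight e lam N \<le> (\<Sum>i<N. eta0\<^sup>2 * lam)"
    unfolding noise_weight_def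
  proof (intro sum_mono)
    fix i
    have "(e i)\<^sup>2 \<le> eta0\<^sup>2" using e_nn[of i] e_le[of i] by (intro power_mono) auto
    moreover have "decay_prod e lam (Suc i) N \<le> 1" using el1 e_nn l0 by (intro decay_prod_le_one) auto
    ultimately have "(e i)\<^sup>2 * lam * decay_prod e lam (Suc i) N \<le> eta0\<^sup>2 * lam * 1"
      using decay_prod_nonneg[OF el1] l0 by (intro mult_mono) auto
    then show "(e i)\<^sup>2 * lam * decay_prod e lam (Suc i) N \<le> eta0\<^sup>2 * lam" by simp
  qed
  then have "lam * noise_weight e lam N \<le> lam * (real N * eta0\<^sup>2 * lam)"
    using l0 by (intro mult_left_mono) (auto simp: mult_ac)
  also have "\<dots> = (lam * eta0 * real N)\<^sup>2 / real N" using N by (simp add: power2_eq_square field_simps)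
  finally show ?thesis unfolding e_def .
qed

lemma sum_poly_decay_schedule_ge:
  fixes N :: nat and eta0 g :: real
  assumes N: "1 \<le> N" and g: "0 \<le> g" and e0: "0 \<le> eta0"
  shows "eta0 * real N / 2 * (1/2) powr g \<le> (\<Sum>m<N. poly_decay_schedule eta0 g N m)"
proof -
  have "(\<Sum>m<N. poly_decay_schedule eta0 g N m) = eta0 * (\<Sum>m\<in>{0..<N}. (1 - real m / real N) powr g)"
    unfolding poly_decay_schedule_def sum_distrib_left by (intro sum.cong) auto
  moreover have "(real N / 2) * (1/2) powr g \<le> (\<Sum>m\<in>{0..<N}. (1 - real m / real N) powr g)"
    using sum_poly_decay_ge[of 0 N g] g N by simp
  ultimately show ?thesis using e0 by (simp add: mult_left_mono mult_ac)
qed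

lemma noise_scale_identity:
  fixes x N g :: real
  assumes x: "0 < x" and N: "0 < N" and g: "0 \<le> g"
  shows "(x / N)\<^sup>2 * N powr (-2*g) * (2 * N / x powr (1/(g+1))) powr (2*g+1)
       = 2 powr (2*g+1) * x powr (1/(g+1)) / N"
proof -
  have l: "ln ((x / N)\<^sup>2 * N powr (-2*g) * (2 * N / x powr (1/(g+1))) powr (2*g+1))
      = 2 * (ln x - ln N) + (-2*g) * ln N + (2*g+1) * (ln 2 + ln N - (1/(g+1)) * ln x)"
    using x N by (simp add: ln_mult ln_div ln_powr power2_eq_square)
  have r: "ln (2 powr (2*g+1) * x powr (1/(g+1)) / N) = (2*g+1) * ln 2 + (1/(g+1)) * ln x - ln N"
    using x N by (simp add: ln_mult ln_div ln_powr)
  have "2 * (ln x - ln N) + (-2*g) * ln N + (2*g+1) * (ln 2 + ln N - (1/(g+1)) * ln x)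
      = (2*g+1) * ln 2 + (1/(g+1)) * ln x - ln N"
    using g by (simp add: field_simps)
  then have "ln ((x / N)\<^sup>2 * N powr (-2*g) * (2 * N / x powr (1/(g+1))) powr (2*g+1))
      = ln (2 powr (2*g+1) * x powr (1/(g+1)) / N)"
    using l r by simp
  then show ?thesis using x N by (subst (asm) ln_inj_iff) auto
qed

lemma decay_exponent_identity:
  fixes x N n g lam eta0 :: real
  assumes x: "0 < x" and N: "0 < N" and n: "0 < n" and g: "0 \<le> g" and xd: "x = lam * eta0 * N"
  shows "lam * eta0 * ((n / 2) * ((n / 2) / N) powr g) = (n / (2 * N / x powr (1/(g+1)))) powr (g+1)"
proof -
  have le: "lam * eta0 = x / N" using xd N by simp
  have l: "ln (lam * eta0 * ((n / 2) * ((n / 2) / N) powr g))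
      = ln x - ln N + (ln n - ln 2) + g * (ln n - ln 2 - ln N)"
    unfolding le using x N n by (simp add: ln_mult ln_div ln_powr)
  have r: "ln ((n / (2 * N / x powr (1/(g+1)))) powr (g+1))
      = (g+1) * (ln n - ln 2 - ln N + (1/(g+1)) * ln x)"
    using x N n by (simp add: ln_mult ln_div ln_powr)
  have "ln x - ln N + (ln n - ln 2) + g * (ln n - ln 2 - ln N) = (g+1) * (ln n - ln 2 - ln N + (1/(g+1)) * ln x)"
    using g by (simp add: field_simps)
  then have "ln (lam * eta0 * ((n / 2) * ((n / 2) / N) powr g)) = ln ((n / (2 * N / x powr (1/(g+1)))) powr (g+1))"
    by (simp only: l r)
  moreover have "0 < lam * eta0 * ((n / 2) * ((n / 2) / N) powr g)" unfolding le using x N n by simp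
  moreover have "0 < (n / (2 * N / x powr (1/(g+1)))) powr (g+1)" using n N x by simp
  ultimately show ?thesis using ln_inj_iff by blast
qed

text \<open>The \<open>i\<close>-th noise term decays like \<open>exp (-(n/M) powr (g+1))\<close> in the number \<open>n = N - i - 1\<close>
  of remaining steps, because \<open>\<Sum>\<^sub>m\<^sub>>\<^sub>i e m\<close> grows like \<open>n powr (g+1)\<close>.\<close>

lemma poly_decay_noise_term_le:
  fixes N i :: nat and eta0 g lam :: real
  assumes i: "i < N" and g: "0 \<le> g" and e0: "0 < eta0" and lp: "0 < lam" and el: "eta0 * lam \<le> 1"
  defines "M \<equiv> 2 * real N / (lam * eta0 * real N) powr (1/(g+1))"
  shows "lam * ((poly_decay_schedule eta0 g N i)\<^sup>2 * lam * decay_prod (poly_decay_schedule eta0 g N) lam (Suc i) N)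
       \<le> lam\<^sup>2 * eta0\<^sup>2 * ((real (N - Suc i) + 1) / real N) powr (2*g)
           * exp (- ((real (N - Suc i) / M) powr (g+1)))"
proof -
  define e where "e = poly_decay_schedule eta0 g N"
  define n where "n = N - Suc i"
  have RN: "0 < real N" using i by simp
  have e_nn: "0 \<le> e k" for k unfolding e_def using e0 by (simp add: poly_decay_schedule_nonneg)
  have el1: "e k * lam \<le> 1" for k
    using mult_right_mono[OF poly_decay_schedule_le[of eta0 g N k] less_imp_le[OF lp]] el e0 g
    by (simp add: e_def)
  have ei: "e i = eta0 * ((real n + 1) / real N) powr g"
  proof -
    have "1 - real i / real N = (real n + 1) / real N" using RN i by (simp add: n_def field_simps)
    then show ?thesis unfolding e_def poly_decay_schedule_def using i by simp
  qed
  have expo: "(real n / M) powr (g+1) \<le> lam * (\<Sum>m\<in>{Suc i..<N}. e m)"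
  proof (cases "n = 0")
    case True then show ?thesis using e_nn lp by (simp add: sum_nonneg)
  next
    case False
    have "(real n / M) powr (g+1) = lam * eta0 * ((real n / 2) * ((real n / 2) / real N) powr g)"
      unfolding M_def using decay_exponent_identity[of "lam * eta0 * real N" "real N" "real n" g lam eta0] False e0 lp RN g
      by simp
    also have "\<dots> \<le> lam * eta0 * (\<Sum>m\<in>{Suc i..<N}. (1 - real m / real N) powr g)"
      using sum_poly_decay_ge[of "Suc i" N g] i g lp e0 unfolding n_def by (intro mult_left_mono) auto
    also have "\<dots> = lam * (\<Sum>m\<in>{Suc i..<N}. e m)"
      unfolding e_def poly_decay_schedule_def sum_distrib_left by (intro sum.cong) auto
    finally show ?thesis .
  qed
  have "lam * ((e i)\<^sup>2 * lam * decay_prod e lam (Suc i) N) = lam\<^sup>2 * (e i)\<^sup>2 * decay_prod e lam (Suc i) N"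
    by (simp add: power2_eq_square mult_ac)
  also have "\<dots> \<le> lam\<^sup>2 * (e i)\<^sup>2 * exp (- ((real n / M) powr (g+1)))"
  proof (intro mult_left_mono)
    have "decay_prod e lam (Suc i) N \<le> exp (- lam * (\<Sum>m\<in>{Suc i..<N}. e m))"
      by (rule decay_prod_le_exp) (rule el1)
    also have "\<dots> \<le> exp (- ((real n / M) powr (g+1)))" using expo by simp
    finally show "decay_prod e lam (Suc i) N \<le> exp (- ((real n / M) powr (g+1)))" .
  qed simp
  also have "\<dots> = lam\<^sup>2 * eta0\<^sup>2 * ((real n + 1) / real N) powr (2*g) * exp (- ((real n / M) powr (g+1)))"
    unfolding ei power_mult_distrib by (simp add: power2_eq_square powr_add[symmetric])
  finally show ?thesis unfolding e_def n_def .
qed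

lemma poly_decay_noise_tail_le:
  fixes N :: nat and eta0 g lam :: real
  assumes N: "1 \<le> N" and g: "0 \<le> g" and e0: "0 < eta0" and lp: "0 < lam"
  defines "x \<equiv> lam * eta0 * real N"
  defines "M \<equiv> 2 * real N / x powr (1/(g+1))"
  shows "(\<Sum>n\<in>{0<..<N}. lam\<^sup>2 * eta0\<^sup>2 * ((real n + 1) / real N) powr (2*g) * exp (- ((real n / M) powr (g+1))))
       \<le> 9 * 2 powr (2*g) * 2 powr (2*g+1) * x powr (1/(g+1)) / real N"
proof -
  define A where "A = lam\<^sup>2 * eta0\<^sup>2 * 2 powr (2*g) * real N powr (-2*g)"
  have RN: "0 < real N" and xp: "0 < x" and Mp: "0 < M"
    using N e0 lp by (auto simp: x_def M_def)
  have "(\<Sum>n\<in>{0<..<N}. lam\<^sup>2 * eta0\<^sup>2 * ((real n + 1) / real N) powr (2*g) * exp (- ((real n / M) powr (g+1))))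
      \<le> (\<Sum>n\<in>{0<..<N}. A * (real n powr (2*g) * exp (- ((real n / M) powr (g+1)))))"
  proof (intro sum_mono)
    fix n assume "n \<in> {0<..<N}"
    then have n1: "1 \<le> real n" by simp
    have "((real n + 1) / real N) powr (2*g) \<le> (2 * real n / real N) powr (2*g)"
      using n1 RN g by (intro powr_mono2) (auto simp: field_simps)
    also have "\<dots> = 2 powr (2*g) * real n powr (2*g) / real N powr (2*g)"
      using n1 RN by (simp add: powr_divide powr_mult)
    also have "\<dots> = 2 powr (2*g) * real n powr (2*g) * real N powr (-2*g)"
      by (simp add: powr_minus divide_inverse)
    finally have "lam\<^sup>2 * eta0\<^sup>2 * ((real n + 1) / real N) powr (2*g)
        \<le> lam\<^sup>2 * eta0\<^sup>2 * (2 powr (2*g) * real n powr (2*g) * real N powr (-2*g))"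
      by (intro mult_left_mono) auto
    then have "lam\<^sup>2 * eta0\<^sup>2 * ((real n + 1) / real N) powr (2*g) * exp (- ((real n / M) powr (g+1)))
        \<le> lam\<^sup>2 * eta0\<^sup>2 * (2 powr (2*g) * real n powr (2*g) * real N powr (-2*g))
           * exp (- ((real n / M) powr (g+1)))"
      by (rule mult_right_mono) simp
    then show "lam\<^sup>2 * eta0\<^sup>2 * ((real n + 1) / real N) powr (2*g) * exp (- ((real n / M) powr (g+1)))
        \<le> A * (real n powr (2*g) * exp (- ((real n / M) powr (g+1))))"
      unfolding A_def by (simp only: mult_ac)
  qed
  also have "\<dots> \<le> A * (9 * M powr (2*g+1))"
    unfolding sum_distrib_left[symmetric] using Mp g
    by (intro mult_left_mono sum_powr_mult_exp_neg_powr_le) (auto simp: A_def)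
  also have "\<dots> = 9 * 2 powr (2*g) * ((x / real N)\<^sup>2 * real N powr (-2*g) * M powr (2*g+1))"
    unfolding A_def x_def using RN by (simp add: power_mult_distrib field_simps)
  also have "(x / real N)\<^sup>2 * real N powr (-2*g) * M powr (2*g+1) = 2 powr (2*g+1) * x powr (1/(g+1)) / real N"
    unfolding M_def by (rule noise_scale_identity[OF xp RN g])
  finally show ?thesis by simp
qed

definition variance_const :: "real \<Rightarrow> real" where
  "variance_const g = 1 + 9 * 2 powr (2*g) * 2 powr (2*g+1)"

lemma sq_div_mult_powr_le:
  fixes x N g :: real
  assumes x: "0 < x" and xN: "x \<le> N" and N: "1 \<le> N" and g: "0 \<le> g"
  shows "(x / N)\<^sup>2 * N powr (-2*g) \<le> x powr (1/(g+1)) / N"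
proof -
  define p where "p = 1/(g+1)"
  have p: "p \<le> 2" "0 < p" unfolding p_def using g by (auto simp: field_simps)
  have "(x / N)\<^sup>2 * N powr (-2*g) \<le> (x / N) powr p * N powr (p - 1)"
  proof (intro mult_mono)
    have "(x / N)\<^sup>2 = (x / N) powr 2" using x N by (simp add: powr_realpow)
    also have "\<dots> \<le> (x / N) powr p" using x xN N p by (intro powr_mono') auto
    finally show "(x / N)\<^sup>2 \<le> (x / N) powr p" .
    show "N powr (-2*g) \<le> N powr (p - 1)"
      unfolding p_def using g N by (intro powr_mono) (auto simp: field_simps)
  qed auto
  also have "\<dots> = x powr p / N"
    using x N by (simp add: powr_divide powr_diff)
  finally show ?thesis unfolding p_def .
qed

lemma lam_noise_weight_le_powr:
  fixes N :: nat and eta0 g lam :: real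
  assumes N: "1 \<le> N" and g: "0 \<le> g" and e0: "0 < eta0" and l0: "0 \<le> lam" and el: "eta0 * lam \<le> 1"
  shows "lam * noise_weight (poly_decay_schedule eta0 g N) lam N
       \<le> variance_const g * (lam * eta0 * real N) powr (1/(g+1)) / real N"
proof (cases "lam = 0")
  case True then show ?thesis by (simp add: variance_const_def)
next
  case False
  then have lp: "0 < lam" using l0 by simp
  define e where "e = poly_decay_schedule eta0 g N"
  define x where "x = lam * eta0 * real N"
  define M where "M = 2 * real N / x powr (1/(g+1))"
  define G where "G n = lam\<^sup>2 * eta0\<^sup>2 * ((real n + 1) / real N) powr (2*g) * exp (- ((real n / M) powr (g+1)))"
    for n :: nat
  have RN: "0 < real N" using N by simp
  have xp: "0 < x" unfolding x_def using lp e0 RN by simp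
  have head: "G 0 \<le> x powr (1/(g+1)) / real N"
  proof -
    have "G 0 = (x / real N)\<^sup>2 * real N powr (-2*g)"
      unfolding G_def x_def using RN by (simp add: powr_minus powr_divide field_simps power_mult_distrib)
    also have "\<dots> \<le> x powr (1/(g+1)) / real N"
      using xp N g el e0 lp unfolding x_def by (intro sq_div_mult_powr_le) (auto simp: mult_ac)
    finally show ?thesis .
  qed
  have "lam * noise_weight e lam N = (\<Sum>i<N. lam * ((e i)\<^sup>2 * lam * decay_prod e lam (Suc i) N))"
    unfolding noise_weight_def by (simp add: sum_distrib_left)
  also have "\<dots> \<le> (\<Sum>i<N. G (N - Suc i))"
    unfolding e_def G_def M_def x_def using g e0 lp el by (intro sum_mono poly_decay_noise_term_le) auto
  also have "\<dots> = (\<Sum>n<N. G n)" by (rule sum.nat_diff_reindex)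
  also have "\<dots> = G 0 + (\<Sum>n\<in>{0<..<N}. G n)"
  proof -
    have "{..<N} = insert 0 {0<..<N}" using N by auto
    then show ?thesis by simp
  qed
  also have "\<dots> \<le> x powr (1/(g+1)) / real N + 9 * 2 powr (2*g) * 2 powr (2*g+1) * x powr (1/(g+1)) / real N"
    using head poly_decay_noise_tail_le[OF N g e0 lp] unfolding G_def M_def x_def by (intro add_mono) auto
  also have "\<dots> = variance_const g * x powr (1/(g+1)) / real N"
    unfolding variance_const_def by (simp add: add_divide_distrib algebra_simps)
  finally show ?thesis unfolding e_def x_def .
qed

lemma lam_noise_weight_le_min:
  fixes N :: nat and eta0 g lam :: real
  assumes "1 \<le> N" and "0 \<le> g" and "0 < eta0" and "0 \<le> lam" and "eta0 * lam \<le> 1"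
  shows "lam * noise_weight (poly_decay_schedule eta0 g N) lam N
     \<le> min ((lam * eta0 * real N)\<^sup>2) (variance_const g * (lam * eta0 * real N) powr (1/(g+1))) / real N"
  using lam_noise_weight_le_sq[OF assms] lam_noise_weight_le_powr[OF assms] assms(1)
  by (simp add: min_divide_distrib_right)

lemma min_sq_powr_le_powr:
  fixes y K p q :: real
  assumes y: "0 \<le> y" and K: "0 \<le> K" and pq: "p \<le> q" and q2: "q \<le> 2"
  shows "min (y\<^sup>2) (K * y powr p) \<le> max 1 K * y powr q"
proof (cases "y \<le> 1")
  case True
  have "y\<^sup>2 \<le> y powr q"
  proof (cases "y = 0")
    case False
    then have "y\<^sup>2 = y powr 2" using y by (simp add: powr_realpow)
    also have "\<dots> \<le> y powr q" using False y True q2 by (intro powr_mono') auto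
    finally show ?thesis .
  qed simp
  also have "\<dots> \<le> max 1 K * y powr q" using mult_right_mono[of 1 "max 1 K" "y powr q"] by simp
  finally show ?thesis by simp
next
  case False
  have "K * y powr p \<le> max 1 K * y powr q"
    using False pq K by (intro mult_mono powr_mono) auto
  then show ?thesis by simp
qed

lemma suminf_lam_noise_weight_le:
  fixes lam :: "nat \<Rightarrow> real" and N :: nat and eta0 g B :: real
  assumes l0: "\<And>j. 0 \<le> lam j" and N: "1 \<le> N" and g: "0 \<le> g" and e0: "0 < eta0"
    and el: "\<And>j. eta0 * lam j \<le> 1"
    and sB: "summable (\<lambda>j. min ((lam j * eta0 * real N)\<^sup>2)
                         (variance_const g * (lam j * eta0 * real N) powr (1/(g+1))))"
    and B: "(\<Sum>j. min ((lam j * eta0 * real N)\<^sup>2)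
                  (variance_const g * (lam j * eta0 * real N) powr (1/(g+1)))) \<le> B"
  shows "(\<Sum>j. ennreal (lam j * noise_weight (poly_decay_schedule eta0 g N) (lam j) N)) \<le> ennreal (B / real N)"
proof -
  define m where "m j = min ((lam j * eta0 * real N)\<^sup>2) (variance_const g * (lam j * eta0 * real N) powr (1/(g+1)))"
    for j
  have m0: "0 \<le> m j" for j unfolding m_def variance_const_def using l0[of j] e0 by simp
  have "(\<Sum>j. ennreal (lam j * noise_weight (poly_decay_schedule eta0 g N) (lam j) N))
      \<le> (\<Sum>j. ennreal (m j / real N))"
  proof (intro suminf_le allI ennreal_leI)
    show "lam j * noise_weight (poly_decay_schedule eta0 g N) (lam j) N \<le> m j / real N" for j
      unfolding m_def by (rule lam_noise_weight_le_min[OF N g e0 l0 el])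
  qed simp_all
  also have "\<dots> = ennreal ((\<Sum>j. m j) / real N)"
  proof -
    have "summable m" using sB unfolding m_def .
    then have "(\<Sum>j. ennreal (m j / real N)) = ennreal (\<Sum>j. m j / real N)"
      using m0 N by (intro suminf_ennreal2 summable_divide) simp_all
    also have "(\<Sum>j. m j / real N) = (\<Sum>j. m j) / real N"
      using \<open>summable m\<close> by (simp add: suminf_divide)
    finally show ?thesis .
  qed
  also have "\<dots> \<le> ennreal (B / real N)"
    using B N unfolding m_def[symmetric] by (intro ennreal_leI divide_right_mono) simp_all
  finally show ?thesis .
qed

lemma suminf_noise_weight_le_capacity:
  fixes lam :: "nat \<Rightarrow> real" and N :: nat and eta0 g b c :: real
  assumes l0: "\<And>j. 0 \<le> lam j" and cap: "\<And>j. lam j \<le> c * (real j + 1) powr (-b)" and c: "0 \<le> c"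
    and b: "1 < b" and gb: "b - 1 < g" and N: "1 \<le> N" and e0: "0 < eta0" and el: "\<And>j. eta0 * lam j \<le> 1"
  shows "(\<Sum>j. ennreal (lam j * noise_weight (poly_decay_schedule eta0 g N) (lam j) N))
     \<le> ennreal (capacity_const b (1/(g+1)) (variance_const g) * (c * eta0 * real N) powr (1/b) / real N)"
proof -
  have yX: "lam j * eta0 * real N \<le> (c * eta0 * real N) * (real j + 1) powr (-b)" for j
    using mult_right_mono[OF cap[of j], of "eta0 * real N"] e0 by (simp add: mult_ac)
  have g: "0 \<le> g" using b gb by simp
  have p: "0 < 1/(g+1)" and pb: "1/(g+1) * b < 1" using gb b g by (simp_all add: field_simps)
  have K: "0 \<le> variance_const g" unfolding variance_const_def by simp
  have X: "0 \<le> c * eta0 * real N" using c e0 by simp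
  have y0: "0 \<le> lam j * eta0 * real N" for j using l0[of j] e0 by simp
  show ?thesis
    by (rule suminf_lam_noise_weight_le[OF l0 N g e0 el summable_min_sq_powr_of_poly_decay[OF b K y0 yX]
          suminf_min_sq_powr_le_of_poly_decay[OF b p pb K X y0 yX]])
qed

lemma suminf_noise_weight_le_capacity_source:
  fixes lam :: "nat \<Rightarrow> real" and N :: nat and eta0 g b c s :: real
  assumes l0: "\<And>j. 0 \<le> lam j" and cap: "\<And>j. lam j \<le> c * (real j + 1) powr (-b)" and c: "0 \<le> c"
    and s: "0 < s" and sb: "s < 1 - 1/b" and b: "1 < b" and gs: "s / (1 - s) < g"
    and N: "1 \<le> N" and e0: "0 < eta0" and el: "\<And>j. eta0 * lam j \<le> 1"
  shows "(\<Sum>j. ennreal (lam j * noise_weight (poly_decay_schedule eta0 g N) (lam j) N))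
     \<le> ennreal (max 1 (variance_const g) * (c * eta0 * real N) powr (1 - s)
                 * (\<Sum>j. (real j + 1) powr (-(b * (1 - s)))) / real N)"
proof -
  define y where "y j = lam j * eta0 * real N" for j
  define M where "M = max 1 (variance_const g)"
  have "0 < 1 / b" using b by simp
  then have s1: "s < 1" using sb by linarith
  have "0 < s / (1 - s)" using s s1 by simp
  then have g: "0 \<le> g" using gs by linarith
  have y0: "0 \<le> y j" for j unfolding y_def using l0[of j] e0 by simp
  have yX: "y j \<le> (c * eta0 * real N) * (real j + 1) powr (-b)" for j
    unfolding y_def using mult_right_mono[OF cap[of j], of "eta0 * real N"] e0 by (simp add: mult_ac)
  have p_le: "1/(g+1) \<le> 1 - s"
  proof -
    have "s < g * (1 - s)" using gs s1 by (simp add: field_simps)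
    then show ?thesis using g by (simp add: field_simps)
  qed
  have qb: "1 < (1 - s) * b" using sb b by (simp add: field_simps)
  have mb: "min ((y j)\<^sup>2) (variance_const g * y j powr (1/(g+1))) \<le> M * y j powr (1 - s)" for j
    unfolding M_def using y0 p_le s by (intro min_sq_powr_le_powr) (auto simp: variance_const_def)
  have M0: "0 \<le> M" unfolding M_def by simp
  have q: "0 < 1 - s" and X: "0 \<le> c * eta0 * real N" using s1 c e0 by simp_all
  note cs = suminf_powr_le_of_poly_decay[OF q qb M0 X y0 yX]
  have m0: "0 \<le> min ((y j)\<^sup>2) (variance_const g * y j powr (1/(g+1)))" for j
    using y0[of j] by (simp add: variance_const_def)
  have sm: "summable (\<lambda>j. min ((y j)\<^sup>2) (variance_const g * y j powr (1/(g+1))))"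
    by (rule summable_comparison_test'[OF cs(1), of 0]) (use mb m0 in simp)
  have "(\<Sum>j. min ((y j)\<^sup>2) (variance_const g * y j powr (1/(g+1)))) \<le> (\<Sum>j. M * y j powr (1 - s))"
    by (rule suminf_le[OF mb sm cs(1)])
  also have "\<dots> \<le> M * (c * eta0 * real N) powr (1 - s) * (\<Sum>j. (real j + 1) powr (-(b * (1 - s))))"
    by (rule cs(2))
  finally show ?thesis
    using suminf_lam_noise_weight_le[OF l0 N g e0 el sm[unfolded y_def]] unfolding y_def M_def by simp
qed

lemma AE_tendsto_zero_of_nn_integral_sq_le_geometric:
  fixes G :: "nat \<Rightarrow> 'a \<Rightarrow> real"
  assumes meas: "\<And>k. G k \<in> borel_measurable M"
    and bound: "\<And>k. (\<integral>\<^sup>+ x. ennreal ((G k x)\<^sup>2) \<partial>M) \<le> ennreal ((1/2)^k)"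
  shows "AE x in M. (\<lambda>k. G k x) \<longlonglongrightarrow> 0"
proof -
  have "(\<integral>\<^sup>+ x. (\<Sum>k. ennreal ((G k x)\<^sup>2)) \<partial>M) = (\<Sum>k. \<integral>\<^sup>+ x. ennreal ((G k x)\<^sup>2) \<partial>M)"
    by (rule nn_integral_suminf) (use meas in measurable)
  also have "\<dots> \<le> (\<Sum>k. ennreal ((1/2)^k))"
    by (intro suminf_le bound summableI)
  also have "\<dots> = ennreal 2"
  proof -
    have gs: "(\<lambda>k. (1/2::real)^k) sums 2" using geometric_sums[of "1/2::real"] by simp
    then have "(\<Sum>k. ennreal ((1/2::real)^k)) = ennreal (\<Sum>k. (1/2::real)^k)"
      by (intro suminf_ennreal2) (auto simp: sums_summable)
    also have "(\<Sum>k. (1/2::real)^k) = 2" using gs sums_unique by metis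
    finally show ?thesis .
  qed
  finally have "(\<integral>\<^sup>+ x. (\<Sum>k. ennreal ((G k x)\<^sup>2)) \<partial>M) \<noteq> \<infinity>"
    by (auto simp: top_unique)
  then have "AE x in M. (\<Sum>k. ennreal ((G k x)\<^sup>2)) \<noteq> \<infinity>"
    by (intro nn_integral_PInf_AE) (use meas in measurable)
  then show ?thesis
  proof (rule AE_mp, intro AE_I2 impI)
    fix x assume "(\<Sum>k. ennreal ((G k x)\<^sup>2)) \<noteq> \<infinity>"
    then have "summable (\<lambda>k. (G k x)\<^sup>2)" by (intro summable_suminf_not_top) auto
    then have "(\<lambda>k. sqrt ((G k x)\<^sup>2)) \<longlonglongrightarrow> sqrt 0" by (intro tendsto_real_sqrt summable_LIMSEQ_zero)
    then show "(\<lambda>k. G k x) \<longlonglongrightarrow> 0" by (simp add: tendsto_rabs_zero_iff)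
  qed
qed

lemma AE_subseq_of_nn_integral_sq_tendsto_zero:
  fixes F :: "nat \<Rightarrow> 'a \<Rightarrow> real"
  assumes meas: "\<And>n. F n \<in> borel_measurable M"
    and lim: "(\<lambda>n. \<integral>\<^sup>+ x. ennreal ((F n x)\<^sup>2) \<partial>M) \<longlonglongrightarrow> 0"
  shows "\<exists>r. filterlim r at_top at_top \<and> (AE x in M. (\<lambda>k. F (r k) x) \<longlonglongrightarrow> 0)"
proof -
  have "\<forall>k. \<exists>N. \<forall>n\<ge>N. (\<integral>\<^sup>+ x. ennreal ((F n x)\<^sup>2) \<partial>M) < ennreal ((1/2)^k)"
  proof
    fix k :: nat
    have "eventually (\<lambda>n. (\<integral>\<^sup>+ x. ennreal ((F n x)\<^sup>2) \<partial>M) < ennreal ((1/2)^k)) sequentially"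
      using lim by (rule order_tendstoD) simp
    then show "\<exists>N. \<forall>n\<ge>N. (\<integral>\<^sup>+ x. ennreal ((F n x)\<^sup>2) \<partial>M) < ennreal ((1/2)^k)"
      by (simp add: eventually_sequentially)
  qed
  then obtain N where N: "\<And>k n. n \<ge> N k \<Longrightarrow> (\<integral>\<^sup>+ x. ennreal ((F n x)\<^sup>2) \<partial>M) < ennreal ((1/2)^k)"
    by metis
  define r where "r k = N k + k" for k
  have "filterlim r at_top at_top"
    by (rule filterlim_at_top_mono[OF filterlim_ident always_eventually]) (simp add: r_def)
  moreover have "AE x in M. (\<lambda>k. F (r k) x) \<longlonglongrightarrow> 0"
    using meas N by (intro AE_tendsto_zero_of_nn_integral_sq_le_geometric less_imp_le) (auto simp: r_def)
  ultimately show ?thesis by blast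
qed

lemma nn_integral_sq_mult_le_of_AE_tendsto:
  fixes g w :: "'a \<Rightarrow> real" and G :: "nat \<Rightarrow> 'a \<Rightarrow> real"
  assumes meas: "\<And>k. G k \<in> borel_measurable M" and wm: "w \<in> borel_measurable M"
    and w0: "\<And>x. w x \<ge> 0"
    and conv: "AE x in M. (\<lambda>k. G k x) \<longlonglongrightarrow> g x"
    and bound: "\<And>k. (\<integral>\<^sup>+ x. ennreal ((G k x)\<^sup>2 * w x) \<partial>M) \<le> Y k"
    and Ylim: "Y \<longlonglongrightarrow> y"
  shows "(\<integral>\<^sup>+ x. ennreal ((g x)\<^sup>2 * w x) \<partial>M) \<le> y"
proof -
  have "(\<integral>\<^sup>+ x. ennreal ((g x)\<^sup>2 * w x) \<partial>M) = (\<integral>\<^sup>+ x. liminf (\<lambda>k. ennreal ((G k x)\<^sup>2 * w x)) \<partial>M)"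
  proof (rule nn_integral_cong_AE, rule AE_mp[OF conv], intro AE_I2 impI)
    fix x assume "(\<lambda>k. G k x) \<longlonglongrightarrow> g x"
    then have "(\<lambda>k. ennreal ((G k x)\<^sup>2 * w x)) \<longlonglongrightarrow> ennreal ((g x)\<^sup>2 * w x)"
      by (intro tendsto_intros)
    then show "ennreal ((g x)\<^sup>2 * w x) = liminf (\<lambda>k. ennreal ((G k x)\<^sup>2 * w x))"
      by (simp add: lim_imp_Liminf)
  qed
  also have "\<dots> \<le> liminf (\<lambda>k. \<integral>\<^sup>+ x. ennreal ((G k x)\<^sup>2 * w x) \<partial>M)"
    by (rule nn_integral_liminf) (use meas wm in measurable)
  also have "\<dots> \<le> liminf Y"
    by (intro Liminf_mono always_eventually allI bound)
  also have "\<dots> = y" using Ylim by (simp add: lim_imp_Liminf)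
  finally show ?thesis .
qed

lemma nn_integral_normal_affine_sq:
  fixes A B sg :: real
  assumes sg: "0 < sg"
  shows "(\<integral>\<^sup>+ e. ennreal ((A + B * e)\<^sup>2) \<partial>density lborel (normal_density 0 sg)) = ennreal (A\<^sup>2 + B\<^sup>2 * sg\<^sup>2)"
proof -
  have h0: "has_bochner_integral lborel (\<lambda>e. normal_density 0 sg e) 1"
    using normal_moment_even[OF sg, of 0 0] by simp
  have h1: "has_bochner_integral lborel (\<lambda>e. normal_density 0 sg e * e) 0"
    using normal_moment_odd[OF sg, of 0 0] by simp
  have h2: "has_bochner_integral lborel (\<lambda>e. normal_density 0 sg e * e\<^sup>2) (sg\<^sup>2)"
    using normal_moment_even[OF sg, of 0 1] by simp
  have "has_bochner_integral lborel (\<lambda>e. A\<^sup>2 * normal_density 0 sg e + (2 * A * B) * (normal_density 0 sg e * e)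
          + B\<^sup>2 * (normal_density 0 sg e * e\<^sup>2)) (A\<^sup>2 * 1 + (2 * A * B) * 0 + B\<^sup>2 * sg\<^sup>2)"
    by (intro has_bochner_integral_add has_bochner_integral_mult_right h0 h1 h2)
  then have hb: "has_bochner_integral lborel (\<lambda>e. normal_density 0 sg e * (A + B * e)\<^sup>2) (A\<^sup>2 + B\<^sup>2 * sg\<^sup>2)"
    by (rule has_bochner_integral_cong[THEN iffD1, rotated 3]) (auto simp: power2_eq_square algebra_simps)
  have "(\<integral>\<^sup>+ e. ennreal ((A + B * e)\<^sup>2) \<partial>density lborel (normal_density 0 sg))
      = (\<integral>\<^sup>+ e. ennreal (normal_density 0 sg e * (A + B * e)\<^sup>2) \<partial>lborel)"
    by (subst nn_integral_density) (auto intro!: nn_integral_cong simp: ennreal_mult normal_density_nonneg)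
  also have "\<dots> = ennreal (A\<^sup>2 + B\<^sup>2 * sg\<^sup>2)"
    using hb by (subst nn_integral_eq_integral) (auto simp: has_bochner_integral_iff normal_density_nonneg)
  finally show ?thesis .
qed

lemma sgd_iter_fun_upd: "n \<le> k \<Longrightarrow> sgd_iter eta phi (z(k := w)) n = sgd_iter eta phi z n"
  by (induction n) (auto simp: Let_def)

lemma sgd_iter_cong: "(\<And>k. k < n \<Longrightarrow> eta k = eta' k) \<Longrightarrow> sgd_iter eta phi z n = sgd_iter eta' phi z n"
  by (induction n) (auto simp: Let_def)

section \<open>One-pass kernel SGD\<close>

locale kernel_sgd =
  fixes mu :: "'x measure"
    and phi :: "'x \<Rightarrow> 'h::{real_inner, complete_space, second_countable_topology}"
    and lam :: "nat \<Rightarrow> real" and v :: "nat \<Rightarrow> 'h"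
    and f :: "'x \<Rightarrow> real" and a :: "nat \<Rightarrow> real"
    and sig s C :: real
  assumes prob: "prob_space mu"
    and phi_meas: "phi \<in> borel_measurable mu"
    and kernel_int: "integrable mu (\<lambda>x. (norm (phi x))\<^sup>2)"
    and lam_nonneg: "\<And>j. lam j \<ge> 0"
    and lam_decr: "decseq lam"
    and v_orth: "\<And>i j. inner (v i) (v j) = (if i = j then 1 else 0)"
    and v_eig: "\<And>j u. (\<integral>x. inner (v j) (phi x) * inner u (phi x) \<partial>mu) = lam j * inner (v j) u"
    and spectral: "\<And>u. (\<lambda>j. lam j * (inner u (v j))\<^sup>2) sums (\<integral>x. (inner u (phi x))\<^sup>2 \<partial>mu)"
    and sigma_pos: "sig > 0"
    and f_meas: "f \<in> borel_measurable mu"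
    and s_pos: "s > 0"
    and a_summ: "summable (\<lambda>j. (a j)\<^sup>2)"
    and a_le: "(\<Sum>j. (a j)\<^sup>2) \<le> 1"
    and source: "(\<lambda>n. \<integral>\<^sup>+ x. ennreal ((f x - (\<Sum>j<n. a j * lam j powr (s/2) * eigfun lam v phi j x))\<^sup>2) \<partial>mu)
                   \<longlonglongrightarrow> 0"
    and hypercontr: "\<And>u w. (\<integral>\<^sup>+ x. ennreal ((inner u (phi x))\<^sup>2 * (inner w (phi x))\<^sup>2) \<partial>mu)
                      \<le> ennreal C * (\<integral>\<^sup>+ x. ennreal ((inner u (phi x))\<^sup>2) \<partial>mu)
                                    * (\<integral>\<^sup>+ x. ennreal ((inner w (phi x))\<^sup>2) \<partial>mu)"
begin

lemma lam_le_lam0: "lam j \<le> lam 0"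
  using lam_decr by (simp add: decseq_def)

definition theta_star :: "nat \<Rightarrow> real" where
  "theta_star j = a j * lam j powr (s/2) * lam j powr (-1/2)"

definition theta_star_trunc :: "nat \<Rightarrow> 'h" where
  "theta_star_trunc n = (\<Sum>i<n. theta_star i *\<^sub>R v i)"

lemma source_partial_sum_eq:
  "(\<Sum>j<n. a j * lam j powr (s/2) * eigfun lam v phi j x) = inner (theta_star_trunc n) (phi x)"
  unfolding theta_star_trunc_def eigfun_def theta_star_def by (simp add: inner_sum_left algebra_simps)

lemma inner_theta_star_trunc: "inner (theta_star_trunc n) (v i) = (if i < n then theta_star i else 0)"
  unfolding theta_star_trunc_def by (simp add: inner_sum_left v_orth if_distrib cong: if_cong)

lemma lam_theta_star_sq: "lam j * (theta_star j)\<^sup>2 = (a j)\<^sup>2 * lam j powr s"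
proof (cases "lam j = 0")
  case True then show ?thesis by (simp add: theta_star_def)
next
  case False
  then have p: "lam j > 0" using lam_nonneg[of j] by simp
  have "lam j * (theta_star j)\<^sup>2 = (a j)\<^sup>2 * (lam j * (lam j powr (s/2))\<^sup>2 * (lam j powr (-1/2))\<^sup>2)"
    by (simp add: theta_star_def power_mult_distrib)
  also have "(lam j powr (s/2))\<^sup>2 = lam j powr s" using p
    by (simp add: powr_powr[symmetric] powr_realpow[symmetric] power2_eq_square powr_add[symmetric])
  also have "(lam j powr (-1/2))\<^sup>2 = lam j powr (-1)" using p
    by (simp add: power2_eq_square powr_add[symmetric])
  also have "lam j * lam j powr s * lam j powr (-1) = lam j powr s" using p
    by (simp add: powr_minus field_simps)
  finally show ?thesis by simp
qed

lemma summable_lam_theta_star_sq: "summable (\<lambda>j. lam j * (theta_star j)\<^sup>2)"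
proof (rule summable_comparison_test'[OF summable_mult2[OF a_summ, of "lam 0 powr s"]])
  show "norm (lam j * (theta_star j)\<^sup>2) \<le> (a j)\<^sup>2 * lam 0 powr s" for j
    using lam_nonneg[of j] lam_le_lam0[of j] s_pos
    by (auto simp: lam_theta_star_sq intro!: mult_left_mono powr_mono2)
qed

lemma integrable_inner_phi_sq: "integrable mu (\<lambda>x. (inner u (phi x))\<^sup>2)"
proof (rule Bochner_Integration.integrable_bound)
  show "integrable mu (\<lambda>x. (norm u)\<^sup>2 * (norm (phi x))\<^sup>2)" using kernel_int by simp
  show "(\<lambda>x. (inner u (phi x))\<^sup>2) \<in> borel_measurable mu" using phi_meas by measurable
  show "AE x in mu. norm ((inner u (phi x))\<^sup>2) \<le> norm ((norm u)\<^sup>2 * (norm (phi x))\<^sup>2)"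
  proof (rule AE_I2)
    fix x
    have "\<bar>inner u (phi x)\<bar> \<le> \<bar>norm u * norm (phi x)\<bar>"
      using Cauchy_Schwarz_ineq2[of u "phi x"] by simp
    then show "norm ((inner u (phi x))\<^sup>2) \<le> norm ((norm u)\<^sup>2 * (norm (phi x))\<^sup>2)"
      by (metis abs_le_square_iff abs_mult abs_norm_cancel power_mult_distrib real_norm_def abs_power2)
  qed
qed

lemma summable_spectral: "summable (\<lambda>i. lam i * (inner u (v i))\<^sup>2)"
  using spectral[of u] by (rule sums_summable)

lemma nn_integral_inner_phi_sq:
  "(\<integral>\<^sup>+ x. ennreal ((inner u (phi x))\<^sup>2) \<partial>mu) = ennreal (\<Sum>i. lam i * (inner u (v i))\<^sup>2)"
  using integrable_inner_phi_sq[of u] spectral[of u]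
  by (auto simp: nn_integral_eq_integral dest: sums_unique)

lemma nn_integral_inner_v_phi_sq: "(\<integral>\<^sup>+ x. ennreal ((inner (v j) (phi x))\<^sup>2) \<partial>mu) = ennreal (lam j)"
proof -
  have "(\<integral>x. inner (v j) (phi x) * inner (v j) (phi x) \<partial>mu) = lam j"
    using v_eig[of j "v j"] v_orth[of j j] by simp
  then show ?thesis using integrable_inner_phi_sq[of "v j"]
    by (simp add: nn_integral_eq_integral power2_eq_square)
qed

text \<open>Twice the excess risk of \<open>th\<close>, written in the eigenbasis.\<close>

definition spectral_dist :: "'h \<Rightarrow> real" where
  "spectral_dist th = (\<Sum>i. lam i * (inner th (v i) - theta_star i)\<^sup>2)"

lemma summable_spectral_dist: "summable (\<lambda>i. lam i * (inner th (v i) - theta_star i)\<^sup>2)"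
proof -
  have "summable (\<lambda>i. 2 * (lam i * (inner th (v i))\<^sup>2) + 2 * (lam i * (theta_star i)\<^sup>2))"
    using summable_spectral[of th] summable_lam_theta_star_sq by (intro summable_add summable_mult)
  then show ?thesis
  proof (rule summable_comparison_test[rotated], intro exI[of _ 0] allI impI)
    fix i :: nat
    have "(inner th (v i) - theta_star i)\<^sup>2 \<le> 2 * (inner th (v i))\<^sup>2 + 2 * (theta_star i)\<^sup>2"
      using zero_le_power2[of "inner th (v i) + theta_star i"] by (simp add: power2_eq_square algebra_simps)
    from mult_left_mono[OF this lam_nonneg[of i]]
    show "norm (lam i * (inner th (v i) - theta_star i)\<^sup>2)
        \<le> 2 * (lam i * (inner th (v i))\<^sup>2) + 2 * (lam i * (theta_star i)\<^sup>2)"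
      using lam_nonneg[of i] by (simp add: algebra_simps)
  qed
qed

lemma inner_diff_theta_star_trunc:
  "inner (th - theta_star_trunc n) (v i) = inner th (v i) - (if i < n then theta_star i else 0)"
  by (simp add: inner_diff_left inner_theta_star_trunc)

lemma spectral_trunc_tendsto:
  "(\<lambda>n. \<Sum>i. lam i * (inner (th - theta_star_trunc n) (v i))\<^sup>2) \<longlonglongrightarrow> spectral_dist th"
proof -
  define A where "A i = lam i * (inner th (v i) - theta_star i)\<^sup>2" for i
  define E where "E i = lam i * (inner th (v i))\<^sup>2" for i
  have sA: "summable A" unfolding A_def by (rule summable_spectral_dist)
  have sE: "summable E" unfolding E_def by (rule summable_spectral)
  have eq: "(\<Sum>i. lam i * (inner (th - theta_star_trunc n) (v i))\<^sup>2) = suminf E + (\<Sum>i<n. A i - E i)" for n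
  proof -
    have "(\<lambda>i. lam i * (inner (th - theta_star_trunc n) (v i))\<^sup>2)
        = (\<lambda>i. E i + (if i < n then A i - E i else 0))"
      by (auto simp: inner_diff_theta_star_trunc A_def E_def)
    moreover have "summable (\<lambda>i. (if i < n then A i - E i else 0))"
      by (rule summable_finite[of "{..<n}"]) auto
    moreover have "(\<Sum>i. (if i < n then A i - E i else 0)) = (\<Sum>i<n. A i - E i)"
      by (subst suminf_finite[of "{..<n}"]) auto
    ultimately show ?thesis using sE by (simp add: suminf_add[symmetric])
  qed
  have "(\<lambda>n. \<Sum>i<n. A i - E i) \<longlonglongrightarrow> suminf A - suminf E"
    using summable_LIMSEQ[OF summable_diff[OF sA sE]] suminf_diff[OF sA sE] by simp
  then have "(\<lambda>n. suminf E + (\<Sum>i<n. A i - E i)) \<longlonglongrightarrow> suminf E + (suminf A - suminf E)"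
    by (intro tendsto_intros)
  then show ?thesis unfolding eq by (simp add: spectral_dist_def A_def[abs_def])
qed

text \<open>The source condition is an \<open>L\<^sup>2\<close> limit only; a subsequence of the truncations of
  \<open>theta_star\<close> converges to \<open>f\<close> almost everywhere, which lets Fatou's lemma transfer bounds
  from the truncations to \<open>f\<close>.\<close>

definition trunc_subseq :: "nat \<Rightarrow> nat" where
  "trunc_subseq = (SOME r. filterlim r at_top at_top
     \<and> (AE x in mu. (\<lambda>k. f x - inner (theta_star_trunc (r k)) (phi x)) \<longlonglongrightarrow> 0))"

lemma
  shows trunc_subseq_at_top: "filterlim trunc_subseq at_top at_top"
    and trunc_subseq_AE_tendsto:
      "AE x in mu. (\<lambda>k. f x - inner (theta_star_trunc (trunc_subseq k)) (phi x)) \<longlonglongrightarrow> 0"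
proof -
  have "\<exists>r. filterlim r at_top at_top \<and> (AE x in mu. (\<lambda>k. f x - inner (theta_star_trunc (r k)) (phi x)) \<longlonglongrightarrow> 0)"
    using source unfolding source_partial_sum_eq
    by (intro AE_subseq_of_nn_integral_sq_tendsto_zero) (use f_meas phi_meas in measurable)
  then have "filterlim trunc_subseq at_top at_top
      \<and> (AE x in mu. (\<lambda>k. f x - inner (theta_star_trunc (trunc_subseq k)) (phi x)) \<longlonglongrightarrow> 0)"
    unfolding trunc_subseq_def by (rule someI_ex)
  then show "filterlim trunc_subseq at_top at_top"
    and "AE x in mu. (\<lambda>k. f x - inner (theta_star_trunc (trunc_subseq k)) (phi x)) \<longlonglongrightarrow> 0"
    by auto
qed

lemma inner_trunc_subseq_AE_tendsto:
  "AE x in mu. (\<lambda>k. inner (th - theta_star_trunc (trunc_subseq k)) (phi x)) \<longlonglongrightarrow> inner th (phi x) - f x"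
proof (rule AE_mp[OF trunc_subseq_AE_tendsto], intro AE_I2 impI)
  fix x assume "(\<lambda>k. f x - inner (theta_star_trunc (trunc_subseq k)) (phi x)) \<longlonglongrightarrow> 0"
  then have "(\<lambda>k. (inner th (phi x) - f x) + (f x - inner (theta_star_trunc (trunc_subseq k)) (phi x)))
      \<longlonglongrightarrow> (inner th (phi x) - f x) + 0"
    by (intro tendsto_intros)
  then show "(\<lambda>k. inner (th - theta_star_trunc (trunc_subseq k)) (phi x)) \<longlonglongrightarrow> inner th (phi x) - f x"
    by (simp add: inner_diff_left)
qed

lemma spectral_trunc_subseq_tendsto:
  "(\<lambda>k. \<Sum>i. lam i * (inner (th - theta_star_trunc (trunc_subseq k)) (v i))\<^sup>2) \<longlonglongrightarrow> spectral_dist th"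
  using filterlim_compose[OF spectral_trunc_tendsto trunc_subseq_at_top] by simp

lemma inner_v_trunc_subseq_tendsto:
  "(\<lambda>k. inner (th - theta_star_trunc (trunc_subseq k)) (v j)) \<longlonglongrightarrow> inner th (v j) - theta_star j"
proof (rule tendsto_eventually)
  have "eventually (\<lambda>k. Suc j \<le> trunc_subseq k) sequentially"
    using trunc_subseq_at_top by (simp add: filterlim_at_top)
  then show "eventually (\<lambda>k. inner (th - theta_star_trunc (trunc_subseq k)) (v j) = inner th (v j) - theta_star j)
      sequentially"
    by eventually_elim (simp add: inner_diff_theta_star_trunc)
qed

lemma excess_risk_le_spectral_dist: "excess_risk mu phi f th \<le> ennreal (spectral_dist th / 2)"
proof -
  let ?d = "\<lambda>k. th - theta_star_trunc (trunc_subseq k)"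
  have "(\<integral>\<^sup>+ x. ennreal ((inner th (phi x) - f x)\<^sup>2 * (1/2)) \<partial>mu) \<le> ennreal (spectral_dist th / 2)"
  proof (rule nn_integral_sq_mult_le_of_AE_tendsto[where G="\<lambda>k x. inner (?d k) (phi x)"])
    show "(\<lambda>x. inner (?d k) (phi x)) \<in> borel_measurable mu" for k using phi_meas by measurable
    show "AE x in mu. (\<lambda>k. inner (?d k) (phi x)) \<longlonglongrightarrow> inner th (phi x) - f x"
      by (rule inner_trunc_subseq_AE_tendsto)
    show "(\<integral>\<^sup>+ x. ennreal ((inner (?d k) (phi x))\<^sup>2 * (1/2)) \<partial>mu)
        \<le> ennreal ((\<Sum>i. lam i * (inner (?d k) (v i))\<^sup>2) / 2)" for k
    proof -
      have "(\<integral>\<^sup>+ x. ennreal ((inner (?d k) (phi x))\<^sup>2 * (1/2)) \<partial>mu)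
          = (\<integral>\<^sup>+ x. ennreal (1/2) * ennreal ((inner (?d k) (phi x))\<^sup>2) \<partial>mu)"
        by (intro nn_integral_cong)
           (use ennreal_mult'[of "1/2::real" "(inner (?d k) (phi _))^2"] in \<open>simp add: mult.commute\<close>)
      also have "\<dots> = ennreal (1/2) * (\<integral>\<^sup>+ x. ennreal ((inner (?d k) (phi x))\<^sup>2) \<partial>mu)"
        by (rule nn_integral_cmult) (use phi_meas in measurable)
      also have "\<dots> = ennreal ((\<Sum>i. lam i * (inner (?d k) (v i))\<^sup>2) / 2)"
        using ennreal_mult'[of "1/2::real" "\<Sum>i. lam i * (inner (?d k) (v i))\<^sup>2"]
        by (simp add: nn_integral_inner_phi_sq mult.commute)
      finally show ?thesis by simp
    qed
    show "(\<lambda>k. ennreal ((\<Sum>i. lam i * (inner (?d k) (v i))\<^sup>2) / 2)) \<longlonglongrightarrow> ennreal (spectral_dist th / 2)"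
      by (intro tendsto_intros spectral_trunc_subseq_tendsto) simp
  qed simp_all
  then show ?thesis unfolding excess_risk_def by simp
qed

lemma integrable_inner_phi_mult: "integrable mu (\<lambda>x. inner u (phi x) * inner w (phi x))"
proof (rule Bochner_Integration.integrable_bound)
  show "integrable mu (\<lambda>x. (inner u (phi x))\<^sup>2 + (inner w (phi x))\<^sup>2)"
    by (intro Bochner_Integration.integrable_add integrable_inner_phi_sq)
  show "AE x in mu. norm (inner u (phi x) * inner w (phi x)) \<le> norm ((inner u (phi x))\<^sup>2 + (inner w (phi x))\<^sup>2)"
  proof (intro AE_I2)
    fix x
    have "2 * \<bar>inner u (phi x)\<bar> * \<bar>inner w (phi x)\<bar> \<le> (inner u (phi x))\<^sup>2 + (inner w (phi x))\<^sup>2"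
      using sum_squares_bound[of "\<bar>inner u (phi x)\<bar>" "\<bar>inner w (phi x)\<bar>"] by simp
    moreover have "0 \<le> \<bar>inner u (phi x)\<bar> * \<bar>inner w (phi x)\<bar>" by simp
    ultimately have "\<bar>inner u (phi x)\<bar> * \<bar>inner w (phi x)\<bar> \<le> (inner u (phi x))\<^sup>2 + (inner w (phi x))\<^sup>2"
      by linarith
    then show "norm (inner u (phi x) * inner w (phi x)) \<le> norm ((inner u (phi x))\<^sup>2 + (inner w (phi x))\<^sup>2)"
      by (simp add: abs_mult)
  qed
qed (use phi_meas in measurable)

lemma nn_integral_fourth_moment_le:
  "(\<integral>\<^sup>+ x. ennreal ((inner u (phi x))\<^sup>2 * (inner (v j) (phi x))\<^sup>2) \<partial>mu)
     \<le> ennreal C * ennreal (lam j) * ennreal (\<Sum>i. lam i * (inner u (v i))\<^sup>2)"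
  using hypercontr[of u "v j", unfolded nn_integral_inner_v_phi_sq nn_integral_inner_phi_sq]
  by (simp add: mult_ac)

lemma integrable_fourth_moment: "integrable mu (\<lambda>x. (inner u (phi x))\<^sup>2 * (inner (v j) (phi x))\<^sup>2)"
proof (rule integrableI_nonneg)
  show "(\<integral>\<^sup>+ x. ennreal ((inner u (phi x))\<^sup>2 * (inner (v j) (phi x))\<^sup>2) \<partial>mu) < \<infinity>"
    using nn_integral_fourth_moment_le
    by (rule le_less_trans) (simp flip: ennreal_mult'' ennreal_mult add: ennreal_mult_less_top)
qed (use phi_meas in auto)

text \<open>Expanding the square, the cross term has mean \<open>lam j \<langle>th, v j\<rangle>\<close> by the eigen-equation.\<close>

lemma integral_noiseless_coord_step:
  fixes th :: 'h and j :: nat and eta :: real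
  defines "d \<equiv> inner th (v j)"
  shows "integrable mu (\<lambda>x. (d - eta * inner th (phi x) * inner (v j) (phi x))\<^sup>2)"
    and "(\<integral>x. (d - eta * inner th (phi x) * inner (v j) (phi x))\<^sup>2 \<partial>mu)
       = d\<^sup>2 - 2 * eta * lam j * d\<^sup>2 + eta\<^sup>2 * (\<integral>x. (inner th (phi x))\<^sup>2 * (inner (v j) (phi x))\<^sup>2 \<partial>mu)"
proof -
  define p where "p x = inner th (phi x)" for x
  define g where "g x = inner (v j) (phi x)" for x
  have int4: "integrable mu (\<lambda>x. (p x)\<^sup>2 * (g x)\<^sup>2)"
    unfolding p_def g_def by (rule integrable_fourth_moment)
  have int2: "integrable mu (\<lambda>x. g x * p x)"
    unfolding p_def g_def by (rule integrable_inner_phi_mult)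
  have int_c: "integrable mu (\<lambda>x. c)" for c :: real
    using prob_space.finite_measure[OF prob] by (rule finite_measure.integrable_const)
  have Q: "(d - eta * p x * g x)\<^sup>2 = d\<^sup>2 - (2 * eta * d) * (g x * p x) + eta\<^sup>2 * ((p x)\<^sup>2 * (g x)\<^sup>2)" for x
    by (simp add: power2_eq_square algebra_simps)
  show "integrable mu (\<lambda>x. (d - eta * inner th (phi x) * inner (v j) (phi x))\<^sup>2)"
    unfolding p_def[symmetric] g_def[symmetric] Q
    by (intro Bochner_Integration.integrable_add Bochner_Integration.integrable_diff integrable_mult_right
        int2 int4 int_c)
  have "(\<integral>x. (d - eta * p x * g x)\<^sup>2 \<partial>mu)
      = (\<integral>x. d\<^sup>2 \<partial>mu) - (2 * eta * d) * (\<integral>x. g x * p x \<partial>mu) + eta\<^sup>2 * (\<integral>x. (p x)\<^sup>2 * (g x)\<^sup>2 \<partial>mu)"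
    unfolding Q using int_c int2 int4
    by (simp add: Bochner_Integration.integral_add Bochner_Integration.integral_diff
        Bochner_Integration.integrable_diff)
  also have "(\<integral>x. g x * p x \<partial>mu) = lam j * d"
    using v_eig[of j th] unfolding g_def p_def d_def by (simp add: inner_commute)
  finally show "(\<integral>x. (d - eta * inner th (phi x) * inner (v j) (phi x))\<^sup>2 \<partial>mu)
      = d\<^sup>2 - 2 * eta * lam j * d\<^sup>2 + eta\<^sup>2 * (\<integral>x. (inner th (phi x))\<^sup>2 * (inner (v j) (phi x))\<^sup>2 \<partial>mu)"
    using prob_space.prob_space[OF prob] unfolding p_def g_def by (simp add: power2_eq_square algebra_simps)
qed

lemma noiseless_coord_step_le:
  assumes eta0: "0 \<le> eta" and etal: "eta * lam j \<le> 1"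
  shows "(\<integral>\<^sup>+ x. ennreal ((inner th (v j) - eta * inner th (phi x) * inner (v j) (phi x))\<^sup>2) \<partial>mu)
    \<le> ennreal ((1 - eta * lam j) * (inner th (v j))\<^sup>2)
       + ennreal (eta\<^sup>2) * (ennreal C * ennreal (lam j) * ennreal (\<Sum>i. lam i * (inner th (v i))\<^sup>2))"
proof -
  define d where "d = inner th (v j)"
  define I where "I = (\<integral>x. (inner th (phi x))\<^sup>2 * (inner (v j) (phi x))\<^sup>2 \<partial>mu)"
  have I0: "0 \<le> I" unfolding I_def by (intro integral_nonneg_AE) auto
  have "(\<integral>\<^sup>+ x. ennreal ((d - eta * inner th (phi x) * inner (v j) (phi x))\<^sup>2) \<partial>mu)
      = ennreal (d\<^sup>2 - 2 * eta * lam j * d\<^sup>2 + eta\<^sup>2 * I)"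
    using integral_noiseless_coord_step[of th j eta] unfolding d_def I_def
    by (simp add: nn_integral_eq_integral)
  also have "\<dots> \<le> ennreal ((1 - eta * lam j) * d\<^sup>2 + eta\<^sup>2 * I)"
    using eta0 lam_nonneg[of j] by (intro ennreal_leI) (simp add: algebra_simps)
  also have "\<dots> = ennreal ((1 - eta * lam j) * d\<^sup>2) + ennreal (eta\<^sup>2) * ennreal I"
    using etal I0 by (simp add: ennreal_plus ennreal_mult)
  also have "ennreal I = (\<integral>\<^sup>+ x. ennreal ((inner th (phi x))\<^sup>2 * (inner (v j) (phi x))\<^sup>2) \<partial>mu)"
    unfolding I_def using integrable_fourth_moment by (simp add: nn_integral_eq_integral)
  also have "\<dots> \<le> ennreal C * ennreal (lam j) * ennreal (\<Sum>i. lam i * (inner th (v i))\<^sup>2)"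
    by (rule nn_integral_fourth_moment_le)
  finally show ?thesis unfolding d_def by (simp add: mult_left_mono add_left_mono)
qed

lemma coord_step_le:
  assumes eta0: "0 \<le> eta" and etal: "eta * lam j \<le> 1"
  shows "(\<integral>\<^sup>+ x. ennreal ((inner th (v j) - theta_star j - eta * (inner th (phi x) - f x) * inner (v j) (phi x))\<^sup>2) \<partial>mu)
    \<le> ennreal ((1 - eta * lam j) * (inner th (v j) - theta_star j)\<^sup>2)
       + ennreal (eta\<^sup>2) * (ennreal C * ennreal (lam j) * ennreal (spectral_dist th))"
proof -
  let ?d = "\<lambda>k. th - theta_star_trunc (trunc_subseq k)"
  have "(\<integral>\<^sup>+ x. ennreal ((inner th (v j) - theta_star j - eta * (inner th (phi x) - f x) * inner (v j) (phi x))\<^sup>2 * 1) \<partial>mu)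
    \<le> ennreal ((1 - eta * lam j) * (inner th (v j) - theta_star j)\<^sup>2)
       + ennreal (eta\<^sup>2) * (ennreal C * ennreal (lam j) * ennreal (spectral_dist th))"
  proof (rule nn_integral_sq_mult_le_of_AE_tendsto
      [where G="\<lambda>k x. inner (?d k) (v j) - eta * inner (?d k) (phi x) * inner (v j) (phi x)"])
    show "(\<lambda>x. inner (?d k) (v j) - eta * inner (?d k) (phi x) * inner (v j) (phi x)) \<in> borel_measurable mu" for k
      using phi_meas by measurable
    show "AE x in mu. (\<lambda>k. inner (?d k) (v j) - eta * inner (?d k) (phi x) * inner (v j) (phi x))
        \<longlonglongrightarrow> inner th (v j) - theta_star j - eta * (inner th (phi x) - f x) * inner (v j) (phi x)"
      by (rule AE_mp[OF inner_trunc_subseq_AE_tendsto[of th]], intro AE_I2 impI)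
         (intro tendsto_intros inner_v_trunc_subseq_tendsto)
    show "(\<integral>\<^sup>+ x. ennreal ((inner (?d k) (v j) - eta * inner (?d k) (phi x) * inner (v j) (phi x))\<^sup>2 * 1) \<partial>mu)
      \<le> ennreal ((1 - eta * lam j) * (inner (?d k) (v j))\<^sup>2)
       + ennreal (eta\<^sup>2) * (ennreal C * ennreal (lam j) * ennreal (\<Sum>i. lam i * (inner (?d k) (v i))\<^sup>2))" for k
      using noiseless_coord_step_le[OF eta0 etal, of "?d k"] by simp
    show "(\<lambda>k. ennreal ((1 - eta * lam j) * (inner (?d k) (v j))\<^sup>2)
       + ennreal (eta\<^sup>2) * (ennreal C * ennreal (lam j) * ennreal (\<Sum>i. lam i * (inner (?d k) (v i))\<^sup>2)))
      \<longlonglongrightarrow> ennreal ((1 - eta * lam j) * (inner th (v j) - theta_star j)\<^sup>2)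
       + ennreal (eta\<^sup>2) * (ennreal C * ennreal (lam j) * ennreal (spectral_dist th))"
      by (intro tendsto_intros inner_v_trunc_subseq_tendsto spectral_trunc_subseq_tendsto)
         (simp_all add: ennreal_mult_eq_top_iff)
  qed simp_all
  then show ?thesis by simp
qed

abbreviation noise :: "real measure" where
  "noise \<equiv> density lborel (normal_density 0 sig)"

abbreviation data :: "('x \<times> real) measure" where
  "data \<equiv> data_dist mu f sig"

lemma prob_space_noise: "prob_space noise"
  using prob_space_normal_density sigma_pos by auto

lemma measurable_add_noise: "(\<lambda>(x, e). (x, f x + e)) \<in> measurable (mu \<Otimes>\<^sub>M noise) (mu \<Otimes>\<^sub>M borel)"
  using f_meas by measurable

lemma sets_data: "sets data = sets (mu \<Otimes>\<^sub>M borel)"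
  unfolding data_dist_def by simp

lemma prob_space_data: "prob_space data"
  unfolding data_dist_def
  using prob_space_pair[OF prob prob_space_noise] measurable_add_noise
  by (rule prob_space.prob_space_distr)

lemma nn_integral_data:
  assumes H: "H \<in> borel_measurable (mu \<Otimes>\<^sub>M borel)"
  shows "(\<integral>\<^sup>+ w. H w \<partial>data) = (\<integral>\<^sup>+ x. \<integral>\<^sup>+ e. H (x, f x + e) \<partial>noise \<partial>mu)"
proof -
  have "(\<integral>\<^sup>+ w. H w \<partial>data) = (\<integral>\<^sup>+ p. H ((\<lambda>(x, e). (x, f x + e)) p) \<partial>(mu \<Otimes>\<^sub>M noise))"
    unfolding data_dist_def
    by (rule nn_integral_distr[OF measurable_add_noise])
       (use H in \<open>simp add: measurable_cong_sets[OF sets_distr refl]\<close>)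
  also have "\<dots> = (\<integral>\<^sup>+ x. \<integral>\<^sup>+ e. H (x, f x + e) \<partial>noise \<partial>mu)"
  proof (subst sigma_finite_measure.nn_integral_fst[symmetric])
    show "sigma_finite_measure noise" using prob_space_noise by (simp add: prob_space_imp_sigma_finite)
    show "(\<lambda>p. H ((\<lambda>(x, e). (x, f x + e)) p)) \<in> borel_measurable (mu \<Otimes>\<^sub>M noise)"
      using measurable_comp[OF measurable_add_noise H] by (simp add: comp_def)
  qed simp
  finally show ?thesis .
qed

lemma sgd_step_coord_le:
  assumes eta0: "0 \<le> eta" and etal: "eta * lam j \<le> 1"
  shows "(\<integral>\<^sup>+ w. ennreal ((inner (th - (eta * (inner th (phi (fst w)) - snd w)) *\<^sub>R phi (fst w)) (v j)
                              - theta_star j)\<^sup>2) \<partial>data)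
    \<le> ennreal ((1 - eta * lam j) * (inner th (v j) - theta_star j)\<^sup>2)
       + ennreal (eta\<^sup>2) * (ennreal C * ennreal (lam j) * ennreal (spectral_dist th))
       + ennreal (eta\<^sup>2 * sig\<^sup>2) * ennreal (lam j)"
proof -
  define d where "d = inner th (v j) - theta_star j"
  define r where "r x = d - eta * (inner th (phi x) - f x) * inner (v j) (phi x)" for x
  have "(\<integral>\<^sup>+ w. ennreal ((inner (th - (eta * (inner th (phi (fst w)) - snd w)) *\<^sub>R phi (fst w)) (v j)
                           - theta_star j)\<^sup>2) \<partial>data)
     = (\<integral>\<^sup>+ x. \<integral>\<^sup>+ e. ennreal ((r x + (eta * inner (v j) (phi x)) * e)\<^sup>2) \<partial>noise \<partial>mu)"
    by (subst nn_integral_data)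
       (use phi_meas in \<open>auto simp: r_def d_def inner_diff_left inner_commute algebra_simps\<close>, measurable)
  also have "\<dots> = (\<integral>\<^sup>+ x. ennreal ((r x)\<^sup>2 + (eta * inner (v j) (phi x))\<^sup>2 * sig\<^sup>2) \<partial>mu)"
    by (simp only: nn_integral_normal_affine_sq[OF sigma_pos])
  also have "\<dots> = (\<integral>\<^sup>+ x. ennreal ((r x)\<^sup>2) \<partial>mu)
      + (\<integral>\<^sup>+ x. ennreal (eta\<^sup>2 * sig\<^sup>2) * ennreal ((inner (v j) (phi x))\<^sup>2) \<partial>mu)"
    by (subst nn_integral_add[symmetric])
       (use phi_meas f_meas in \<open>auto intro!: nn_integral_cong
          simp: r_def ennreal_mult[symmetric] power_mult_distrib mult_ac\<close>)
  also have "\<dots> = (\<integral>\<^sup>+ x. ennreal ((r x)\<^sup>2) \<partial>mu) + ennreal (eta\<^sup>2 * sig\<^sup>2) * ennreal (lam j)"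
    by (subst nn_integral_cmult) (use phi_meas in \<open>simp_all add: nn_integral_inner_v_phi_sq\<close>)
  also have "\<dots> \<le> ennreal ((1 - eta * lam j) * d\<^sup>2)
       + ennreal (eta\<^sup>2) * (ennreal C * ennreal (lam j) * ennreal (spectral_dist th))
       + ennreal (eta\<^sup>2 * sig\<^sup>2) * ennreal (lam j)"
    using coord_step_le[OF eta0 etal, of th] unfolding r_def d_def by (intro add_mono) auto
  finally show ?thesis unfolding d_def .
qed

lemma measurable_sgd_iter:
  "{..<k} \<subseteq> I \<Longrightarrow> (\<lambda>z. sgd_iter eta phi z k) \<in> borel_measurable (PiM I (\<lambda>_. data))"
proof (induction k)
  case (Suc k)
  then have kI: "k \<in> I" and "{..<k} \<subseteq> I" by auto
  with Suc.IH have IH: "(\<lambda>z. sgd_iter eta phi z k) \<in> borel_measurable (PiM I (\<lambda>_. data))" by blast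
  have c: "(\<lambda>z. z k) \<in> measurable (PiM I (\<lambda>_. data)) data" using kI by (rule measurable_component_singleton)
  have "(\<lambda>w. phi (fst w)) \<in> borel_measurable data" "snd \<in> borel_measurable data"
    by (subst measurable_cong_sets[OF sets_data refl]; use phi_meas in measurable)+
  then have "(\<lambda>z. phi (fst (z k))) \<in> borel_measurable (PiM I (\<lambda>_. data))"
    "(\<lambda>z. snd (z k)) \<in> borel_measurable (PiM I (\<lambda>_. data))"
    using measurable_compose[OF c] by auto
  then show ?case using IH by (simp add: Let_def) measurable
qed simp

lemma prob_space_samples: "prob_space (PiM I (\<lambda>_. data))"
  by (rule prob_space_PiM) (use prob_space_data in auto)

definition coord_error :: "(nat \<Rightarrow> real) \<Rightarrow> nat \<Rightarrow> nat \<Rightarrow> ennreal" where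
  "coord_error eta j k =
     (\<integral>\<^sup>+ z. ennreal ((inner (sgd_iter eta phi z k) (v j) - theta_star j)\<^sup>2) \<partial>PiM {..<k} (\<lambda>_. data))"

lemma coord_error_0: "coord_error eta j 0 = ennreal ((theta_star j)\<^sup>2)"
  unfolding coord_error_def by (simp add: PiM_empty)

lemma ennreal_spectral_dist:
  "ennreal (spectral_dist th) = (\<Sum>i. ennreal (lam i) * ennreal ((inner th (v i) - theta_star i)\<^sup>2))"
  unfolding spectral_dist_def using summable_spectral_dist[of th] lam_nonneg
  by (subst suminf_ennreal2[symmetric]) (auto simp: ennreal_mult)

lemma measurable_spectral_dist_sgd_iter:
  "(\<lambda>z. ennreal (spectral_dist (sgd_iter eta phi z k))) \<in> borel_measurable (PiM {..<k} (\<lambda>_. data))"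
  unfolding ennreal_spectral_dist using measurable_sgd_iter[of k "{..<k}" eta] by measurable

lemma nn_integral_spectral_dist_sgd_iter:
  "(\<integral>\<^sup>+ z. ennreal (spectral_dist (sgd_iter eta phi z k)) \<partial>PiM {..<k} (\<lambda>_. data))
     = (\<Sum>i. ennreal (lam i) * coord_error eta i k)"
  unfolding ennreal_spectral_dist coord_error_def
  by (subst nn_integral_suminf; (subst nn_integral_cmult)?) (use measurable_sgd_iter[of k "{..<k}" eta] in auto)

text \<open>The \<open>k\<close>-th sample is independent of the iterate after \<open>k\<close> steps, so the one-step bound
  integrates against the product measure.\<close>

lemma coord_error_Suc_le:
  assumes eta0: "0 \<le> eta k" and etal: "eta k * lam j \<le> 1"
  shows "coord_error eta j (Suc k) \<le> ennreal (1 - eta k * lam j) * coord_error eta j k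
     + ennreal ((eta k)\<^sup>2) * (ennreal C * ennreal (lam j) * (\<Sum>i. ennreal (lam i) * coord_error eta i k))
     + ennreal ((eta k)\<^sup>2 * sig\<^sup>2) * ennreal (lam j)"
proof -
  let ?P = "PiM {..<k} (\<lambda>_. data)"
  let ?th = "\<lambda>z. sgd_iter eta phi z k"
  have psf: "product_sigma_finite (\<lambda>_. data)"
    unfolding product_sigma_finite_def using prob_space_data by (simp add: prob_space_imp_sigma_finite)
  have "coord_error eta j (Suc k)
      = (\<integral>\<^sup>+ z. \<integral>\<^sup>+ w. ennreal ((inner (sgd_iter eta phi (z(k := w)) (Suc k)) (v j) - theta_star j)\<^sup>2) \<partial>data \<partial>?P)"
    unfolding coord_error_def lessThan_Suc
  proof (rule product_sigma_finite.product_nn_integral_insert[OF psf])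
    have "(\<lambda>z. sgd_iter eta phi z (Suc k)) \<in> borel_measurable (PiM (insert k {..<k}) (\<lambda>_. data))"
      by (rule measurable_sgd_iter) auto
    then show "(\<lambda>z. ennreal ((inner (sgd_iter eta phi z (Suc k)) (v j) - theta_star j)\<^sup>2))
        \<in> borel_measurable (PiM (insert k {..<k}) (\<lambda>_. data))"
      by measurable
  qed auto
  also have "\<dots> = (\<integral>\<^sup>+ z. \<integral>\<^sup>+ w. ennreal ((inner (?th z - (eta k * (inner (?th z) (phi (fst w)) - snd w))
                       *\<^sub>R phi (fst w)) (v j) - theta_star j)\<^sup>2) \<partial>data \<partial>?P)"
    by (simp add: sgd_iter_fun_upd Let_def)
  also have "\<dots> \<le> (\<integral>\<^sup>+ z. ennreal (1 - eta k * lam j) * ennreal ((inner (?th z) (v j) - theta_star j)\<^sup>2)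
       + ennreal ((eta k)\<^sup>2) * (ennreal C * ennreal (lam j) * ennreal (spectral_dist (?th z)))
       + ennreal ((eta k)\<^sup>2 * sig\<^sup>2) * ennreal (lam j) \<partial>?P)"
    by (intro nn_integral_mono order.trans[OF sgd_step_coord_le[OF eta0 etal]])
       (use etal in \<open>simp add: ennreal_mult\<close>)
  also have "\<dots> = ennreal (1 - eta k * lam j) * coord_error eta j k
     + ennreal ((eta k)\<^sup>2) * (ennreal C * ennreal (lam j) * (\<Sum>i. ennreal (lam i) * coord_error eta i k))
     + ennreal ((eta k)\<^sup>2 * sig\<^sup>2) * ennreal (lam j)"
  proof -
    have "(\<lambda>z. ennreal ((inner (?th z) (v j) - theta_star j)\<^sup>2)) \<in> borel_measurable ?P"
      using measurable_sgd_iter[of k "{..<k}" eta] by measurable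
    moreover have "(\<integral>\<^sup>+ z. ennreal (lam j) \<partial>?P) = ennreal (lam j)"
      using prob_space.emeasure_space_1[OF prob_space_samples[of "{..<k}"]] by simp
    ultimately show ?thesis
      using measurable_spectral_dist_sgd_iter[of eta k]
      by (simp add: nn_integral_add nn_integral_cmult coord_error_def[symmetric]
          nn_integral_spectral_dist_sgd_iter[symmetric] del: nn_integral_const)
  qed
  finally show ?thesis .
qed

lemma expected_risk_le_coord_error:
  "expected_risk mu phi f sig eta N \<le> ennreal (1/2) * (\<Sum>i. ennreal (lam i) * coord_error eta i N)"
proof -
  have "expected_risk mu phi f sig eta N
      \<le> (\<integral>\<^sup>+ z. ennreal (1/2) * ennreal (spectral_dist (sgd_iter eta phi z N)) \<partial>PiM {..<N} (\<lambda>_. data))"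
    unfolding expected_risk_def
  proof (intro nn_integral_mono)
    fix z
    have "ennreal (spectral_dist th / 2) = ennreal (1/2) * ennreal (spectral_dist th)" for th
      using ennreal_mult'[of "1/2::real" "spectral_dist th"] by (simp add: mult.commute)
    then show "excess_risk mu phi f (sgd_iter eta phi z N) \<le> ennreal (1/2) * ennreal (spectral_dist (sgd_iter eta phi z N))"
      by (metis excess_risk_le_spectral_dist)
  qed
  also have "\<dots> = ennreal (1/2) * (\<Sum>i. ennreal (lam i) * coord_error eta i N)"
    using measurable_spectral_dist_sgd_iter[of eta N]
    by (simp add: nn_integral_cmult nn_integral_spectral_dist_sgd_iter)
  finally show ?thesis .
qed

text \<open>With \<open>\<theta>\<^sub>0 = 0\<close> the bias term is \<open>\<Sum>\<^sub>j a\<^sub>j\<^sup>2 lam\<^sub>j\<^sup>s \<Prod>\<^sub>m (1 - eta\<^sub>m lam\<^sub>j)\<close>, and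
  \<open>x\<^sup>s exp (-x S) \<le> (s/S)\<^sup>s\<close> bounds each factor uniformly in \<open>j\<close>.\<close>

lemma bias_term_le:
  assumes el: "\<And>j k. eta k * lam j \<le> 1" and S: "0 < S" and S_le: "S \<le> (\<Sum>m<N. eta m)"
  shows "(\<Sum>j. ennreal (lam j * decay_prod eta (lam j) 0 N) * coord_error eta j 0) \<le> ennreal ((s / S) powr s)"
proof -
  have "(\<Sum>j. ennreal (lam j * decay_prod eta (lam j) 0 N) * coord_error eta j 0)
      \<le> (\<Sum>j. ennreal ((a j)\<^sup>2 * (s / S) powr s))"
  proof (intro suminf_le allI)
    fix j
    have "decay_prod eta (lam j) 0 N \<le> exp (- lam j * (\<Sum>m\<in>{0..<N}. eta m))"
      by (rule decay_prod_le_exp) (rule el)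
    also have "\<dots> \<le> exp (- lam j * S)"
      using S_le lam_nonneg[of j] by (simp add: atLeast0LessThan mult_left_mono)
    finally have P: "decay_prod eta (lam j) 0 N \<le> exp (- lam j * S)" .
    have "lam j * decay_prod eta (lam j) 0 N * (theta_star j)\<^sup>2
        = (a j)\<^sup>2 * (lam j powr s * decay_prod eta (lam j) 0 N)"
      using lam_theta_star_sq[of j] by (simp add: mult_ac)
    also have "\<dots> \<le> (a j)\<^sup>2 * (lam j powr s * exp (- lam j * S))"
      using P by (intro mult_left_mono) auto
    also have "\<dots> \<le> (a j)\<^sup>2 * (s / S) powr s"
      using powr_mult_exp_neg_le[OF lam_nonneg S s_pos, of j] by (intro mult_left_mono) auto
    finally show "ennreal (lam j * decay_prod eta (lam j) 0 N) * coord_error eta j 0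
        \<le> ennreal ((a j)\<^sup>2 * (s / S) powr s)"
      unfolding coord_error_0 using lam_nonneg[of j] decay_prod_nonneg[OF el]
      by (simp add: ennreal_mult[symmetric] ennreal_leI)
  qed auto
  also have "\<dots> = ennreal ((\<Sum>j. (a j)\<^sup>2) * (s / S) powr s)"
    using a_summ by (subst suminf_ennreal2) (auto intro: summable_mult2 simp: suminf_mult2)
  also have "\<dots> \<le> ennreal ((s / S) powr s)"
    using a_le a_summ by (intro ennreal_leI mult_left_le_one_le) (auto intro: suminf_nonneg)
  finally show ?thesis .
qed

lemma expected_risk_le_bias_variance:
  assumes eta0: "\<And>k. 0 \<le> eta k" and etac: "\<And>k. eta k \<le> c0" and el: "\<And>j k. eta k * lam j \<le> 1"
    and C: "0 \<le> C" and cT: "C * c0 * (\<Sum>j. lam j) \<le> 1/2" and lsum: "summable lam"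
    and S: "0 < S" and S_le: "S \<le> (\<Sum>m<N. eta m)"
  shows "expected_risk mu phi f sig eta N
    \<le> ennreal (1/2) * (ennreal ((s / S) powr s)
        + 2 * ennreal (C * (\<Sum>j. lam j * (theta_star j)\<^sup>2) + sig\<^sup>2)
            * (\<Sum>j. ennreal (lam j * noise_weight eta (lam j) N)))"
proof -
  have B: "(\<Sum>j. ennreal (lam j) * coord_error eta j 0) = ennreal (\<Sum>j. lam j * (theta_star j)\<^sup>2)"
    unfolding coord_error_0 using summable_lam_theta_star_sq lam_nonneg
    by (subst suminf_ennreal2[symmetric]) (auto simp: ennreal_mult)
  have B0: "0 \<le> (\<Sum>j. lam j * (theta_star j)\<^sup>2)"
    using summable_lam_theta_star_sq lam_nonneg by (intro suminf_nonneg) auto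
  have "expected_risk mu phi f sig eta N \<le> ennreal (1/2) * (\<Sum>j. ennreal (lam j) * coord_error eta j N)"
    by (rule expected_risk_le_coord_error)
  also have "\<dots> \<le> ennreal (1/2) * ((\<Sum>j. ennreal (lam j * decay_prod eta (lam j) 0 N) * coord_error eta j 0)
      + 2 * (ennreal C * ennreal (\<Sum>j. lam j * (theta_star j)\<^sup>2) + ennreal (sig\<^sup>2))
          * (\<Sum>j. ennreal (lam j * noise_weight eta (lam j) N)))"
    unfolding B[symmetric]
    by (intro mult_left_mono weighted_error_le[OF lam_nonneg lsum eta0 etac el C cT]
        coord_error_Suc_le eta0 el) simp
  also have "\<dots> \<le> ennreal (1/2) * (ennreal ((s / S) powr s)
      + 2 * ennreal (C * (\<Sum>j. lam j * (theta_star j)\<^sup>2) + sig\<^sup>2)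
          * (\<Sum>j. ennreal (lam j * noise_weight eta (lam j) N)))"
    using C B0 by (intro mult_left_mono add_mono bias_term_le[OF el S S_le]) (simp_all add: ennreal_mult ennreal_plus)
  finally show ?thesis .
qed

end

section \<open>Convergence rates\<close>

locale kernel_sgd_capacity = kernel_sgd +
  fixes beta c c0 :: real
  assumes beta_gt: "beta > 1"
    and capacity: "\<And>j. lam j \<le> c * (real j + 1) powr (-beta)"
    and C_nonneg: "0 \<le> C"
    and c0_pos: "c0 > 0"
    and c0_le: "c0 * lam 0 \<le> 1"
    and c0_lt: "2 * C * (\<Sum>j. lam j) * c0 < 1"
begin

lemma c_nonneg: "0 \<le> c"
  using capacity[of 0] lam_nonneg[of 0] by simp

lemma summable_lam: "summable lam"
proof (rule summable_comparison_test'[of "\<lambda>j. c * (real j + 1) powr (-beta)" 0])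
  show "summable (\<lambda>j. c * (real j + 1) powr (-beta))"
    using beta_gt by (intro summable_mult summable_shifted_powr)
  show "norm (lam j) \<le> c * (real j + 1) powr (-beta)" for j
    using capacity[of j] lam_nonneg[of j] by simp
qed

lemma step_mult_lam_le_one: "0 \<le> eta \<Longrightarrow> eta \<le> c0 \<Longrightarrow> eta * lam j \<le> 1"
  using mult_mono[of eta c0 "lam j" "lam 0"] lam_nonneg[of j] lam_le_lam0[of j] c0_le c0_pos by simp

definition noise_level :: real where
  "noise_level = C * (\<Sum>j. lam j * (theta_star j)\<^sup>2) + sig\<^sup>2"

lemma noise_level_nonneg: "0 \<le> noise_level"
  unfolding noise_level_def using C_nonneg summable_lam_theta_star_sq lam_nonneg
  by (intro add_nonneg_nonneg mult_nonneg_nonneg suminf_nonneg) auto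

lemma expected_risk_poly_decay_le:
  assumes N: "1 \<le> N" and g: "0 < g" and e0: "0 < eta0" and ec: "eta0 \<le> c0"
  shows "expected_risk mu phi f sig (\<lambda>k. eta0 * (1 - real k / real N) powr g) N
    \<le> ennreal (1/2) * (ennreal ((s / (eta0 * real N / 2 * (1/2) powr g)) powr s)
        + 2 * ennreal noise_level * (\<Sum>j. ennreal (lam j * noise_weight (poly_decay_schedule eta0 g N) (lam j) N)))"
proof -
  let ?e = "poly_decay_schedule eta0 g N"
  have "expected_risk mu phi f sig (\<lambda>k. eta0 * (1 - real k / real N) powr g) N = expected_risk mu phi f sig ?e N"
    unfolding expected_risk_def
    by (intro nn_integral_cong arg_cong[where f="excess_risk mu phi f"] sgd_iter_cong)
       (simp add: poly_decay_schedule_def)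
  also have "\<dots> \<le> ennreal (1/2) * (ennreal ((s / (eta0 * real N / 2 * (1/2) powr g)) powr s)
        + 2 * ennreal noise_level * (\<Sum>j. ennreal (lam j * noise_weight ?e (lam j) N)))"
    unfolding noise_level_def
  proof (rule expected_risk_le_bias_variance)
    show "0 \<le> ?e k" and "?e k \<le> c0" and "?e k * lam j \<le> 1" for k j
      using poly_decay_schedule_nonneg[of eta0 g N k] poly_decay_schedule_le[of eta0 g N k] e0 ec g
      by (auto intro: step_mult_lam_le_one)
    show "C * c0 * (\<Sum>j. lam j) \<le> 1/2" using c0_lt by (simp add: mult_ac)
    show "eta0 * real N / 2 * (1/2) powr g \<le> (\<Sum>m<N. ?e m)"
      using N g e0 by (intro sum_poly_decay_schedule_ge) auto
  qed (use C_nonneg summable_lam e0 N in auto)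
  finally show ?thesis .
qed

lemma scaled_step_bounds:
  assumes "1 \<le> N" and "0 \<le> al"
  shows "0 < c0 * real N powr (-al)" and "c0 * real N powr (-al) \<le> c0"
  using assms c0_pos powr_mono[of "-al" 0 "real N"] by (auto simp: mult_left_le)

lemma noise_sum_large_source_le:
  assumes N: "1 \<le> N" and gb: "beta - 1 < gamma" and al: "0 \<le> al"
  defines "eta0 \<equiv> c0 * real N powr (-al)"
  shows "(\<Sum>j. ennreal (lam j * noise_weight (poly_decay_schedule eta0 gamma N) (lam j) N))
     \<le> ennreal (capacity_const beta (1/(gamma+1)) (variance_const gamma) * (c * c0) powr (1/beta)
                 * real N powr ((1 - al) / beta - 1))"
proof -
  let ?K = "capacity_const beta (1/(gamma+1)) (variance_const gamma)"
  have RN: "0 < real N" using N by simp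
  have e0: "0 < eta0" and ec: "eta0 \<le> c0" unfolding eta0_def using scaled_step_bounds[OF N al] by auto
  have "eta0 * real N = c0 * real N powr (1 - al)"
    unfolding eta0_def using RN by (simp add: powr_diff powr_minus field_simps)
  then have eq: "(c * eta0 * real N) powr (1/beta) / real N = (c * c0) powr (1/beta) * real N powr ((1 - al) / beta - 1)"
    using powr_scale_div[of "c * c0" "real N" "1 - al" "1/beta"] c_nonneg c0_pos RN by (simp add: mult.assoc)
  have "(\<Sum>j. ennreal (lam j * noise_weight (poly_decay_schedule eta0 gamma N) (lam j) N))
      \<le> ennreal (?K * (c * eta0 * real N) powr (1/beta) / real N)"
    using e0 ec step_mult_lam_le_one
    by (intro suminf_noise_weight_le_capacity[OF lam_nonneg capacity c_nonneg beta_gt gb N e0]) simp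
  also have "?K * (c * eta0 * real N) powr (1/beta) / real N
      = ?K * (c * c0) powr (1/beta) * real N powr ((1 - al) / beta - 1)"
    using eq by (simp add: mult.assoc times_divide_eq_right[symmetric] del: times_divide_eq_right)
  finally show ?thesis .
qed

theorem rate_large_source:
  assumes sb: "1 - 1/beta \<le> s" and gb: "beta - 1 < gamma"
  shows "\<exists>K. \<forall>N::nat. N > 0 \<longrightarrow>
           expected_risk mu phi f sig
             (\<lambda>k. c0 * real N powr (-((s*beta - beta + 1) / (s*beta + 1))) * (1 - real k / real N) powr gamma) N
           \<le> ennreal (K * real N powr (-(s*beta / (s*beta + 1))))"
proof -
  define al where "al = (s*beta - beta + 1) / (s*beta + 1)"
  define r where "r = s*beta / (s*beta + 1)"
  define B0 where "B0 = 2 * s / (c0 * (1/2) powr gamma)"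
  define V0 where "V0 = capacity_const beta (1/(gamma+1)) (variance_const gamma) * (c * c0) powr (1/beta)"
  have sb1: "0 < s*beta + 1" using s_pos beta_gt by (simp add: add_pos_pos)
  have al: "0 \<le> al"
    using sb beta_gt mult_right_mono[OF sb, of beta] unfolding al_def by (simp add: algebra_simps)
  have "0 < beta * (s*beta + 1)" using sb1 beta_gt by simp
  then have r: "(1 - al) * s = r" "(1 - al) / beta - 1 = - r"
    unfolding al_def r_def using sb1 by (simp_all add: field_simps)
  have g: "0 < gamma" using gb beta_gt by simp
  have V0: "0 \<le> V0"
    unfolding V0_def using gb g beta_gt
    by (intro mult_nonneg_nonneg capacity_const_nonneg) (auto simp: field_simps variance_const_def)
  have B0: "0 \<le> B0" unfolding B0_def using s_pos c0_pos by simp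
  show ?thesis
  proof (intro exI[of _ "1/2 * (B0 powr s + 2 * noise_level * V0)"] allI impI)
    fix N :: nat assume "0 < N"
    then have N: "1 \<le> N" and RN: "0 < real N" by auto
    note bounds = scaled_step_bounds[OF N al]
    have "expected_risk mu phi f sig (\<lambda>k. c0 * real N powr (-al) * (1 - real k / real N) powr gamma) N
        \<le> ennreal (1/2) * (ennreal (B0 powr s * real N powr (-r)) + 2 * ennreal noise_level
             * (\<Sum>j. ennreal (lam j * noise_weight (poly_decay_schedule (c0 * real N powr (-al)) gamma N) (lam j) N)))"
      using expected_risk_poly_decay_le[OF N g bounds]
      unfolding bias_scale_eq[OF RN c0_pos s_pos] B0_def[symmetric] r(1) .
    also have "\<dots> \<le> ennreal (1/2 * (B0 powr s * real N powr (-r) + 2 * noise_level * (V0 * real N powr (-r))))"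
      using noise_sum_large_source_le[OF N gb al] B0 V0
      by (intro ennreal_half_bias_variance_le noise_level_nonneg) (simp_all add: V0_def r(2))
    finally show "expected_risk mu phi f sig
             (\<lambda>k. c0 * real N powr (-((s*beta - beta + 1) / (s*beta + 1))) * (1 - real k / real N) powr gamma) N
           \<le> ennreal (1/2 * (B0 powr s + 2 * noise_level * V0) * real N powr (-(s*beta / (s*beta + 1))))"
      unfolding al_def[symmetric] r_def[symmetric] by (simp add: algebra_simps)
  qed
qed

lemma noise_sum_small_source_le:
  assumes N: "1 \<le> N" and sb: "s < 1 - 1/beta" and gs: "s / (1 - s) < gamma"
  shows "(\<Sum>j. ennreal (lam j * noise_weight (poly_decay_schedule c0 gamma N) (lam j) N))
     \<le> ennreal (max 1 (variance_const gamma) * (c * c0) powr (1 - s)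
                 * (\<Sum>j. (real j + 1) powr (-(beta * (1 - s)))) * real N powr (-s))"
proof -
  let ?M = "max 1 (variance_const gamma)" and ?Z = "\<Sum>j. (real j + 1) powr (-(beta * (1 - s)))"
  have RN: "0 < real N" using N by simp
  have "(\<Sum>j. ennreal (lam j * noise_weight (poly_decay_schedule c0 gamma N) (lam j) N))
      \<le> ennreal (?M * (c * c0 * real N) powr (1 - s) * ?Z / real N)"
    using c0_pos step_mult_lam_le_one
    by (intro suminf_noise_weight_le_capacity_source[OF lam_nonneg capacity c_nonneg s_pos sb beta_gt gs N]) auto
  also have "?M * (c * c0 * real N) powr (1 - s) * ?Z / real N = ?M * ?Z * ((c * c0 * real N powr 1) powr (1 - s) / real N)"
    using RN by simp
  also have "(c * c0 * real N powr 1) powr (1 - s) / real N = (c * c0) powr (1 - s) * real N powr (-s)"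
    using powr_scale_div[of "c * c0" "real N" 1 "1 - s"] c_nonneg c0_pos RN by simp
  finally show ?thesis by (simp add: mult_ac)
qed

theorem rate_small_source:
  assumes sb: "s < 1 - 1/beta" and gs: "s / (1 - s) < gamma"
  shows "\<exists>K. \<forall>N::nat. N > 0 \<longrightarrow>
           expected_risk mu phi f sig (\<lambda>k. c0 * (1 - real k / real N) powr gamma) N
           \<le> ennreal (K * real N powr (-s))"
proof -
  define B0 where "B0 = 2 * s / (c0 * (1/2) powr gamma)"
  define V0 where "V0 = max 1 (variance_const gamma) * (c * c0) powr (1 - s)
                          * (\<Sum>j. (real j + 1) powr (-(beta * (1 - s))))"
  have "0 < 1 / beta" using beta_gt by simp
  then have s1: "s < 1" using sb by linarith
  have "0 < s / (1 - s)" using s_pos s1 by simp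
  then have g: "0 < gamma" using gs by linarith
  have V0: "0 \<le> V0"
  proof -
    have "1 < beta * (1 - s)" using sb beta_gt by (simp add: field_simps)
    then show ?thesis unfolding V0_def
      by (intro mult_nonneg_nonneg suminf_nonneg summable_shifted_powr) auto
  qed
  have B0: "0 \<le> B0" unfolding B0_def using s_pos c0_pos by simp
  show ?thesis
  proof (intro exI[of _ "1/2 * (B0 powr s + 2 * noise_level * V0)"] allI impI)
    fix N :: nat assume "0 < N"
    then have N: "1 \<le> N" and RN: "0 < real N" by auto
    have "expected_risk mu phi f sig (\<lambda>k. c0 * (1 - real k / real N) powr gamma) N
        \<le> ennreal (1/2) * (ennreal (B0 powr s * real N powr (-s)) + 2 * ennreal noise_level
             * (\<Sum>j. ennreal (lam j * noise_weight (poly_decay_schedule c0 gamma N) (lam j) N)))"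
      using expected_risk_poly_decay_le[OF N g c0_pos order.refl]
        bias_scale_eq[OF RN c0_pos s_pos, of 0 gamma] RN
      unfolding B0_def by simp
    also have "\<dots> \<le> ennreal (1/2 * (B0 powr s * real N powr (-s) + 2 * noise_level * (V0 * real N powr (-s))))"
      using noise_sum_small_source_le[OF N sb gs] B0 V0
      by (intro ennreal_half_bias_variance_le noise_level_nonneg) (simp_all add: V0_def)
    finally show "expected_risk mu phi f sig (\<lambda>k. c0 * (1 - real k / real N) powr gamma) N
        \<le> ennreal (1/2 * (B0 powr s + 2 * noise_level * V0) * real N powr (-s))"
      by (simp add: algebra_simps)
  qed
qed

end

theorem mainTheorem7:
  fixes mu :: "'x measure"
    and phi :: "'x \<Rightarrow> 'h::{real_inner, complete_space, second_countable_topology}"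
    and lam :: "nat \<Rightarrow> real" and v :: "nat \<Rightarrow> 'h"
    and f :: "'x \<Rightarrow> real" and a :: "nat \<Rightarrow> real"
    and sig beta s C c c0 gamma :: real
  assumes prob: "prob_space mu"
    and phi_meas: "phi \<in> borel_measurable mu"
    and kernel_int: "integrable mu (\<lambda>x. (norm (phi x))\<^sup>2)"
    and lam_nonneg: "\<And>j. lam j \<ge> 0"
    and lam_decr: "decseq lam"
    and v_orth: "\<And>i j. inner (v i) (v j) = (if i = j then 1 else 0)"
    and v_eig: "\<And>j u. (\<integral>x. inner (v j) (phi x) * inner u (phi x) \<partial>mu) = lam j * inner (v j) u"
    and spectral: "\<And>u. (\<lambda>j. lam j * (inner u (v j))\<^sup>2) sums (\<integral>x. (inner u (phi x))\<^sup>2 \<partial>mu)"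
    and sigma_pos: "sig > 0"
    and f_meas: "f \<in> borel_measurable mu"
    and beta_gt: "beta > 1"
    and capacity: "\<And>j. lam j \<le> c * (real j + 1) powr (-beta)"
    and s_pos: "s > 0"
    and a_summ: "summable (\<lambda>j. (a j)\<^sup>2)"
    and a_le: "(\<Sum>j. (a j)\<^sup>2) \<le> 1"
    and source: "(\<lambda>n. \<integral>\<^sup>+ x. ennreal ((f x - (\<Sum>j<n. a j * lam j powr (s/2) * eigfun lam v phi j x))\<^sup>2) \<partial>mu)
                   \<longlonglongrightarrow> 0"
    and hypercontr: "\<And>u w. (\<integral>\<^sup>+ x. ennreal ((inner u (phi x))\<^sup>2 * (inner w (phi x))\<^sup>2) \<partial>mu)
                      \<le> ennreal C * (\<integral>\<^sup>+ x. ennreal ((inner u (phi x))\<^sup>2) \<partial>mu)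
                                    * (\<integral>\<^sup>+ x. ennreal ((inner w (phi x))\<^sup>2) \<partial>mu)"
    and c0_pos: "c0 > 0"
    and c0_le: "c0 * lam 0 \<le> 1"
    and c0_lt: "2 * C * (\<Sum>j. lam j) * c0 < 1"
  shows "(s \<ge> 1 - 1/beta \<and> gamma > beta - 1 \<longrightarrow>
            (\<exists>K. \<forall>N::nat. N > 0 \<longrightarrow>
               expected_risk mu phi f sig
                 (\<lambda>k. c0 * real N powr (-((s*beta - beta + 1) / (s*beta + 1)))
                        * (1 - real k / real N) powr gamma) N
               \<le> ennreal (K * real N powr (-(s*beta / (s*beta + 1))))))
       \<and> (s < 1 - 1/beta \<and> gamma > s / (1 - s) \<longrightarrow>
            (\<exists>K. \<forall>N::nat. N > 0 \<longrightarrow>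
               expected_risk mu phi f sig (\<lambda>k. c0 * (1 - real k / real N) powr gamma) N
               \<le> ennreal (K * real N powr (-s))))"
proof -
  text \<open>\<open>ennreal\<close> truncates a negative \<open>C\<close> to \<open>0\<close>, so hypercontractivity also holds with
    \<open>max C 0\<close>.\<close>
  have C_trunc: "ennreal C = ennreal (max C 0)"
    by (cases "C \<le> 0") (auto simp: ennreal_neg max_def)
  interpret kernel_sgd_capacity mu phi lam v f a sig s "max C 0" beta c c0
  proof (intro kernel_sgd_capacity.intro kernel_sgd_capacity_axioms.intro)
    show "kernel_sgd mu phi lam v f a sig s (max C 0)"
      by (rule kernel_sgd.intro[OF prob phi_meas kernel_int lam_nonneg lam_decr v_orth v_eig spectral
            sigma_pos f_meas s_pos a_summ a_le source hypercontr[unfolded C_trunc]])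
    show "2 * max C 0 * (\<Sum>j. lam j) * c0 < 1"
      using c0_lt by (cases "C \<le> 0") (auto simp: max_def)
  qed (use beta_gt capacity c0_pos c0_le in auto)
  show ?thesis using rate_large_source rate_small_source by blast
qed

end
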